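(* Let $\pi$ be a smooth irreducible representation of $G=\mathrm{U}(1,1)(E/F)$ over $\overline{\mathbb{F}}_p$. Then $\pi$ admits a central character, and the restriction $\pi|_{G_S}$ is semisimple of length at most $2$.
   Context: $p$ is an odd prime, $F$ a nonarchimedean local field of residual characteristic $p$, $E$ its unramified quadratic extension. $G=\{g\in\mathrm{GL}_2(E):g^*sg=s\}$ with $s=\begin{pmatrix}0&1\\1&0\end{pmatrix}$ and $g^*$ the conjugate transpose; $G_S=G\cap\mathrm{SL}_2(E)=\mathrm{SU}(1,1)(E/F)$. *)

theory Defs
  imports Main "HOL-Computational_Algebra.Polynomial"
begin

datatype 'a mat2 = M2 (e11: 'a) (e12: 'a) (e21: 'a) (e22: 'a)

definition m2_mult :: "'a::comm_ring_1 mat2 \<Rightarrow> 'a mat2 \<Rightarrow> 'a mat2" where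
  "m2_mult A B = M2 (e11 A * e11 B + e12 A * e21 B) (e11 A * e12 B + e12 A * e22 B)
                    (e21 A * e11 B + e22 A * e21 B) (e21 A * e12 B + e22 A * e22 B)"

definition m2_one :: "'a::comm_ring_1 mat2" where "m2_one = M2 1 0 0 1"

definition m2_det :: "'a::comm_ring_1 mat2 \<Rightarrow> 'a" where
  "m2_det A = e11 A * e22 A - e12 A * e21 A"

definition m2_star :: "('a \<Rightarrow> 'a) \<Rightarrow> 'a mat2 \<Rightarrow> 'a mat2" where
  "m2_star \<sigma> A = M2 (\<sigma> (e11 A)) (\<sigma> (e21 A)) (\<sigma> (e12 A)) (\<sigma> (e22 A))"

definition m2_s :: "'a::comm_ring_1 mat2" where "m2_s = M2 0 1 1 0"

text \<open>v is a normalized discrete valuation on the nonzero elements of E (value at 0 irrelevant).\<close>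
definition discrete_valuation :: "('e::field \<Rightarrow> int) \<Rightarrow> bool" where
  "discrete_valuation v \<longleftrightarrow>
     (\<forall>x y. x \<noteq> 0 \<longrightarrow> y \<noteq> 0 \<longrightarrow> v (x * y) = v x + v y) \<and>
     (\<forall>x y. x \<noteq> 0 \<longrightarrow> y \<noteq> 0 \<longrightarrow> x + y \<noteq> 0 \<longrightarrow> v (x + y) \<ge> min (v x) (v y)) \<and>
     (\<forall>n. \<exists>x. x \<noteq> 0 \<and> v x = n)"

text \<open>"x has valuation at least n" (with v(0) = infinity)\<close>
definition val_ge :: "('e::field \<Rightarrow> int) \<Rightarrow> int \<Rightarrow> 'e \<Rightarrow> bool" where
  "val_ge v n x \<longleftrightarrow> x = 0 \<or> v x \<ge> n"

definition val_complete :: "('e::field \<Rightarrow> int) \<Rightarrow> bool" where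
  "val_complete v \<longleftrightarrow>
     (\<forall>a :: nat \<Rightarrow> 'e. (\<forall>N. \<exists>M. \<forall>m\<ge>M. \<forall>n\<ge>M. val_ge v N (a m - a n)) \<longrightarrow>
        (\<exists>L. \<forall>N. \<exists>M. \<forall>n\<ge>M. val_ge v N (a n - L)))"

definition val_ring :: "('e::field \<Rightarrow> int) \<Rightarrow> 'e set" where
  "val_ring v = {x. val_ge v 0 x}"

definition val_ideal :: "('e::field \<Rightarrow> int) \<Rightarrow> 'e set" where
  "val_ideal v = {x. val_ge v 1 x}"

definition finite_residue_field :: "('e::field \<Rightarrow> int) \<Rightarrow> 'e set \<Rightarrow> bool" where
  "finite_residue_field v K \<longleftrightarrow>
     (\<exists>R. finite R \<and> R \<subseteq> K \<inter> val_ring v \<and>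
          (\<forall>x \<in> K \<inter> val_ring v. \<exists>r\<in>R. x - r \<in> val_ideal v))"

text \<open>
  Setting: E is a nonarchimedean local field (complete w.r.t. the normalized discrete valuation v,
  finite residue field of characteristic p), sigma is a nontrivial field automorphism of order 2
  preserving v, F = {x. sigma x = x}, and E/F is unramified (a uniformizer of E lies in F).
  Then F is a nonarchimedean local field of residual characteristic p and E its unramified
  quadratic extension with Galois conjugation sigma.
\<close>
definition unram_quad_setting :: "nat \<Rightarrow> ('e::field \<Rightarrow> int) \<Rightarrow> ('e \<Rightarrow> 'e) \<Rightarrow> bool" where
  "unram_quad_setting p v \<sigma> \<longleftrightarrow>
     discrete_valuation v \<and> val_complete v \<and>
     finite_residue_field v UNIV \<and> finite_residue_field v {x. \<sigma> x = x} \<and>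
     of_nat p \<in> val_ideal v \<and>
     bij \<sigma> \<and> (\<forall>x y. \<sigma> (x + y) = \<sigma> x + \<sigma> y) \<and> (\<forall>x y. \<sigma> (x * y) = \<sigma> x * \<sigma> y) \<and>
     \<sigma> 1 = 1 \<and> (\<forall>x. \<sigma> (\<sigma> x) = x) \<and> (\<exists>x. \<sigma> x \<noteq> x) \<and>
     (\<forall>x. x \<noteq> 0 \<longrightarrow> v (\<sigma> x) = v x) \<and>
     (\<exists>\<pi>. \<pi> \<noteq> 0 \<and> \<sigma> \<pi> = \<pi> \<and> v \<pi> = 1)"

definition U11 :: "('e::field \<Rightarrow> 'e) \<Rightarrow> 'e mat2 set" where
  "U11 \<sigma> = {g. m2_det g \<noteq> 0 \<and> m2_mult (m2_star \<sigma> g) (m2_mult m2_s g) = m2_s}"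

definition SU11 :: "('e::field \<Rightarrow> 'e) \<Rightarrow> 'e mat2 set" where
  "SU11 \<sigma> = {g \<in> U11 \<sigma>. m2_det g = 1}"

definition group_center :: "'e::field mat2 set \<Rightarrow> 'e mat2 set" where
  "group_center H = {z \<in> H. \<forall>g\<in>H. m2_mult z g = m2_mult g z}"

definition congr_sub :: "('e::field \<Rightarrow> int) \<Rightarrow> nat \<Rightarrow> 'e mat2 set" where
  "congr_sub v n = {g. m2_det g \<noteq> 0 \<and> val_ge v (int n) (e11 g - 1) \<and> val_ge v (int n) (e12 g) \<and>
                        val_ge v (int n) (e21 g) \<and> val_ge v (int n) (e22 g - 1)}"

definition is_Fpbar :: "nat \<Rightarrow> 'k::field itself \<Rightarrow> bool" where
  "is_Fpbar p _ \<longleftrightarrow> CHAR('k) = p \<and>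
     (\<forall>q :: 'k poly. degree q > 0 \<longrightarrow> (\<exists>x. poly q x = 0)) \<and>
     (\<forall>x :: 'k. \<exists>n>0. x ^ (p ^ n) = x)"

definition is_rep :: "('k::field \<Rightarrow> 'v::ab_group_add \<Rightarrow> 'v) \<Rightarrow> 'e::field mat2 set \<Rightarrow>
                      ('e mat2 \<Rightarrow> 'v \<Rightarrow> 'v) \<Rightarrow> bool" where
  "is_rep scale H \<rho> \<longleftrightarrow> vector_space scale \<and>
     (\<forall>g\<in>H. Vector_Spaces.linear scale scale (\<rho> g)) \<and>
     (\<forall>x. \<rho> m2_one x = x) \<and>
     (\<forall>g\<in>H. \<forall>h\<in>H. \<forall>x. \<rho> (m2_mult g h) x = \<rho> g (\<rho> h x))"

text \<open>smooth: every vector is fixed by an open subgroup (the K_n \<inter> H form a basis)\<close>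
definition is_smooth :: "('e::field \<Rightarrow> int) \<Rightarrow> 'e mat2 set \<Rightarrow> ('e mat2 \<Rightarrow> 'v \<Rightarrow> 'v) \<Rightarrow> bool" where
  "is_smooth v H \<rho> \<longleftrightarrow> (\<forall>x. \<exists>n. \<forall>g \<in> H \<inter> congr_sub v n. \<rho> g x = x)"

definition stable_subspace :: "('k::field \<Rightarrow> 'v::ab_group_add \<Rightarrow> 'v) \<Rightarrow> 'e mat2 set \<Rightarrow>
                      ('e mat2 \<Rightarrow> 'v \<Rightarrow> 'v) \<Rightarrow> 'v set \<Rightarrow> bool" where
  "stable_subspace scale H \<rho> W \<longleftrightarrow> module.subspace scale W \<and> (\<forall>h\<in>H. \<forall>w\<in>W. \<rho> h w \<in> W)"

definition irred_subrep :: "('k::field \<Rightarrow> 'v::ab_group_add \<Rightarrow> 'v) \<Rightarrow> 'e mat2 set \<Rightarrow>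
                      ('e mat2 \<Rightarrow> 'v \<Rightarrow> 'v) \<Rightarrow> 'v set \<Rightarrow> bool" where
  "irred_subrep scale H \<rho> W \<longleftrightarrow> stable_subspace scale H \<rho> W \<and> W \<noteq> {0} \<and>
     (\<forall>U. stable_subspace scale H \<rho> U \<longrightarrow> U \<subseteq> W \<longrightarrow> U = {0} \<or> U = W)"

definition has_central_character :: "('k::field \<Rightarrow> 'v::ab_group_add \<Rightarrow> 'v) \<Rightarrow> 'e::field mat2 set \<Rightarrow>
                      ('e mat2 \<Rightarrow> 'v \<Rightarrow> 'v) \<Rightarrow> bool" where
  "has_central_character scale H \<rho> \<longleftrightarrow>
     (\<exists>\<chi>. (\<forall>z \<in> group_center H. \<chi> z \<noteq> 0) \<and>
          (\<forall>z \<in> group_center H. \<forall>z' \<in> group_center H. \<chi> (m2_mult z z') = \<chi> z * \<chi> z') \<and>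
          (\<forall>z \<in> group_center H. \<forall>x. \<rho> z x = scale (\<chi> z) x))"

text \<open>semisimple of length at most 2 (space is nonzero here): irreducible or direct sum of two irreducibles\<close>
definition semisimple_length_le2 :: "('k::field \<Rightarrow> 'v::ab_group_add \<Rightarrow> 'v) \<Rightarrow> 'e mat2 set \<Rightarrow>
                      ('e mat2 \<Rightarrow> 'v \<Rightarrow> 'v) \<Rightarrow> bool" where
  "semisimple_length_le2 scale H \<rho> \<longleftrightarrow>
     UNIV = {0::'v} \<or> irred_subrep scale H \<rho> UNIV \<or>
     (\<exists>W1 W2. irred_subrep scale H \<rho> W1 \<and> irred_subrep scale H \<rho> W2 \<and>
        W1 \<inter> W2 = {0} \<and> (\<forall>x. \<exists>a\<in>W1. \<exists>b\<in>W2. x = a + b))"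

end

theory Submission
  imports Defs "HOL-Computational_Algebra.Primes"
begin

text \<open>
  The centre of \<open>U(1,1)\<close> consists of the scalars \<open>l\<close> with \<open>l \<sigma>(l) = 1\<close>. As the residue field is
  finite, some power \<open>l\<^sup>N\<close> lies in any given principal congruence subgroup and so fixes a given
  smooth vector; over the algebraically closed coefficient field the central element then has an
  eigenvector, and by irreducibility it acts by the eigenvalue.

  By Hilbert 90 every norm-one element is \<open>c / \<sigma>(c)\<close> with \<open>c\<close> a unit of \<open>E\<close>. As \<open>p\<close> is odd, half of
  the residue classes of units are squares, and by Hensel's lemma a unit that is a square modulo
  the maximal ideal is a square. Hence the norm-one elements modulo squares of norm-one elements
  have at most two classes, and \<open>U(1,1) = Z SU(1,1) \<union> Z SU(1,1) t\<close> for a single \<open>t\<close>. In this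
  situation a maximal proper \<open>SU(1,1)\<close>-stable subspace \<open>M\<close> (Zorn) is either \<open>0\<close>, or the
  representation is \<open>M \<oplus> t M\<close> with both summands irreducible.
\<close>

section \<open>Representations of groups of \<open>2 \<times> 2\<close> matrices\<close>

lemma m2_eq_iff: "A = B \<longleftrightarrow> e11 A = e11 B \<and> e12 A = e12 B \<and> e21 A = e21 B \<and> e22 A = e22 B"
  by (cases A; cases B) auto

lemma m2_mult_assoc: "m2_mult (m2_mult A B) C = m2_mult A (m2_mult B C)"
  by (simp add: m2_mult_def algebra_simps)

lemma m2_mult_one [simp]: "m2_mult m2_one A = A" "m2_mult A m2_one = A"
  by (simp_all add: m2_mult_def m2_one_def m2_eq_iff)

lemma m2_det_mult: "m2_det (m2_mult A B) = m2_det A * m2_det B"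
  by (simp add: m2_mult_def m2_det_def algebra_simps)

definition m2_scalar :: "'a::comm_ring_1 \<Rightarrow> 'a mat2" where
  "m2_scalar a = M2 a 0 0 a"

lemma m2_scalar_mult: "m2_mult (m2_scalar a) (m2_scalar b) = m2_scalar (a * b)"
  by (simp add: m2_scalar_def m2_mult_def)

lemma m2_scalar_commute: "m2_mult (m2_scalar a) A = m2_mult A (m2_scalar a)"
  by (simp add: m2_scalar_def m2_mult_def algebra_simps)

lemma m2_scalar_one: "m2_scalar 1 = m2_one"
  by (simp add: m2_scalar_def m2_one_def)

lemma m2_det_scalar: "m2_det (m2_scalar a) = a ^ 2"
  by (simp add: m2_scalar_def m2_det_def power2_eq_square)

definition m2_inv :: "'a::field mat2 \<Rightarrow> 'a mat2" where
  "m2_inv A = M2 (e22 A / m2_det A) (- e12 A / m2_det A) (- e21 A / m2_det A) (e11 A / m2_det A)"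

lemma m2_inv_right: "m2_det A \<noteq> 0 \<Longrightarrow> m2_mult A (m2_inv A) = m2_one"
  by (cases A) (simp add: m2_mult_def m2_inv_def m2_one_def m2_det_def diff_divide_distrib[symmetric]
      add_divide_distrib[symmetric] algebra_simps)

lemma m2_inv_left: "m2_det A \<noteq> 0 \<Longrightarrow> m2_mult (m2_inv A) A = m2_one"
  by (cases A) (simp add: m2_mult_def m2_inv_def m2_one_def m2_det_def diff_divide_distrib[symmetric]
      add_divide_distrib[symmetric] algebra_simps)

lemma m2_det_inv: "m2_det A \<noteq> 0 \<Longrightarrow> m2_det (m2_inv A) = inverse (m2_det A)"
  using m2_det_mult[of A "m2_inv A"] by (simp add: m2_inv_right m2_one_def m2_det_def field_simps)

definition poly_apply :: "('a::field \<Rightarrow> 'b::ab_group_add \<Rightarrow> 'b) \<Rightarrow> ('b \<Rightarrow> 'b) \<Rightarrow> 'a poly \<Rightarrow> 'b \<Rightarrow> 'b" where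
  "poly_apply scale A q x = (\<Sum>i\<le>degree q. scale (coeff q i) ((A ^^ i) x))"

context vector_space
begin

lemma poly_apply_eq_sum:
  assumes "degree q \<le> n"
  shows "poly_apply scale A q x = (\<Sum>i\<le>n. coeff q i *s (A ^^ i) x)"
proof -
  have "(\<Sum>i\<le>n. coeff q i *s (A ^^ i) x) = (\<Sum>i\<le>degree q. coeff q i *s (A ^^ i) x)"
    by (rule sum.mono_neutral_right) (use assms in \<open>auto simp: coeff_eq_0\<close>)
  then show ?thesis by (simp add: poly_apply_def)
qed

lemma poly_apply_linear_factor:
  assumes "Vector_Spaces.linear scale scale A"
  shows "poly_apply scale A ([:- z, 1:] * q) x = A (poly_apply scale A q x) - z *s poly_apply scale A q x"
proof -
  let ?n = "degree q"
  have hom: "module_hom scale scale A" using assms by (simp add: linear_iff_module_hom)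
  have deg: "degree ([:- z, 1:] * q) \<le> Suc ?n"
    using degree_mult_le[of "[:- z, 1:]" q] by simp
  have factor: "[:- z, 1:] * q = pCons 0 q - smult z q"
    by simp
  have "poly_apply scale A ([:- z, 1:] * q) x = (\<Sum>i\<le>Suc ?n. coeff ([:- z, 1:] * q) i *s (A ^^ i) x)"
    by (rule poly_apply_eq_sum[OF deg])
  also have "\<dots> = (\<Sum>i\<le>Suc ?n. coeff (pCons 0 q) i *s (A ^^ i) x)
                   - (\<Sum>i\<le>Suc ?n. (z * coeff q i) *s (A ^^ i) x)"
    unfolding factor by (simp add: scale_left_diff_distrib sum_subtractf)
  also have "(\<Sum>i\<le>Suc ?n. coeff (pCons 0 q) i *s (A ^^ i) x) = (\<Sum>i\<le>?n. coeff q i *s (A ^^ Suc i) x)"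
    by (subst sum.atMost_Suc_shift) simp
  also have "\<dots> = A (poly_apply scale A q x)"
    by (simp add: poly_apply_def module_hom.sum[OF hom] module_hom.scale[OF hom])
  also have "(\<Sum>i\<le>Suc ?n. (z * coeff q i) *s (A ^^ i) x) = z *s poly_apply scale A q x"
    by (simp only: poly_apply_eq_sum[of q "Suc ?n", OF le_SucI[OF le_refl]] scale_sum_right scale_scale)
  finally show ?thesis .
qed

lemma poly_apply_monom_minus_one:
  assumes "N > 0"
  shows "poly_apply scale A (monom 1 N - 1) x = (A ^^ N) x - x"
proof -
  have deg: "degree (monom 1 N - 1 :: 'a poly) \<le> N"
    by (metis degree_diff_le degree_monom_le degree_1 le0)
  have "coeff (monom 1 N - 1) i *s y = (if i = N then y else 0) - (if i = 0 then y else 0)" for i y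
    using assms by (auto simp: coeff_monom)
  then show ?thesis
    by (simp add: poly_apply_eq_sum[OF deg] sum_subtractf)
qed

lemma eigenvector_if_poly_annihilates:
  assumes lin: "Vector_Spaces.linear scale scale A"
    and alg_closed: "\<And>q :: 'a poly. degree q > 0 \<Longrightarrow> \<exists>r. poly q r = 0"
    and "x \<noteq> 0"
  shows "q \<noteq> 0 \<Longrightarrow> poly_apply scale A q x = 0 \<Longrightarrow> \<exists>c y. y \<noteq> 0 \<and> A y = c *s y"
proof (induction "degree q" arbitrary: q rule: less_induct)
  case (less q)
  show ?case
  proof (cases "degree q = 0")
    case True
    then have "poly_apply scale A q x = coeff q 0 *s x" by (simp add: poly_apply_def)
    moreover have "coeff q 0 \<noteq> 0" using True less.prems(1) by (metis leading_coeff_0_iff)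
    ultimately show ?thesis using less.prems(2) \<open>x \<noteq> 0\<close> by simp
  next
    case False
    then obtain r where "poly q r = 0" using alg_closed by blast
    then obtain q' where q: "q = [:- r, 1:] * q'" by (metis dvdE poly_eq_0_iff_dvd)
    have "q' \<noteq> 0" using less.prems q by auto
    then have deg: "degree q = Suc (degree q')" unfolding q by (subst degree_mult_eq) auto
    show ?thesis
    proof (cases "poly_apply scale A q' x = 0")
      case True
      then show ?thesis using less.hyps[of q'] deg \<open>q' \<noteq> 0\<close> by auto
    next
      case False
      have "A (poly_apply scale A q' x) = r *s poly_apply scale A q' x"
        using less.prems(2) unfolding q poly_apply_linear_factor[OF lin] by simp
      then show ?thesis using False by blast
    qed
  qed
qed

lemma eigenvector_if_periodic:
  assumes lin: "Vector_Spaces.linear scale scale A"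
    and alg_closed: "\<And>q :: 'a poly. degree q > 0 \<Longrightarrow> \<exists>r. poly q r = 0"
    and "x \<noteq> 0" and "N > 0" and "(A ^^ N) x = x"
  shows "\<exists>c y. y \<noteq> 0 \<and> A y = c *s y"
proof (rule eigenvector_if_poly_annihilates[OF lin alg_closed \<open>x \<noteq> 0\<close>])
  have "coeff (monom (1::'a) N - 1) N = 1"
    using \<open>N > 0\<close> by (simp add: coeff_monom)
  then show "monom (1::'a) N - 1 \<noteq> 0"
    by (metis coeff_0 zero_neq_one)
  show "poly_apply scale A (monom 1 N - 1) x = 0"
    using assms(4,5) by (simp add: poly_apply_monom_minus_one)
qed

end

lemma group_center_commute: "z \<in> group_center G \<Longrightarrow> g \<in> G \<Longrightarrow> m2_mult z g = m2_mult g z"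
  and group_center_subset: "z \<in> group_center G \<Longrightarrow> z \<in> G"
  unfolding group_center_def by blast+

lemma group_center_mult:
  assumes "\<And>g h. g \<in> G \<Longrightarrow> h \<in> G \<Longrightarrow> m2_mult g h \<in> G"
    and z: "z \<in> group_center G" and z': "z' \<in> group_center G"
  shows "m2_mult z z' \<in> group_center G"
proof -
  have "m2_mult (m2_mult z z') g = m2_mult g (m2_mult z z')" if "g \<in> G" for g
  proof -
    have "m2_mult (m2_mult z z') g = m2_mult z (m2_mult z' g)"
      by (rule m2_mult_assoc)
    also have "\<dots> = m2_mult (m2_mult z g) z'"
      by (simp only: group_center_commute[OF z' that] m2_mult_assoc)
    also have "\<dots> = m2_mult g (m2_mult z z')"
      by (simp only: group_center_commute[OF z that] m2_mult_assoc)
    finally show ?thesis .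
  qed
  then show ?thesis
    using assms group_center_subset unfolding group_center_def by blast
qed

lemma irred_subrepD:
  "irred_subrep scale H \<rho> W \<Longrightarrow> stable_subspace scale H \<rho> U \<Longrightarrow> U \<subseteq> W \<Longrightarrow> U = {0} \<or> U = W"
  by (simp add: irred_subrep_def)

locale mat2_group_rep =
  fixes scale :: "'k::field \<Rightarrow> 'v::ab_group_add \<Rightarrow> 'v"
    and G :: "'a::field mat2 set" and \<rho> :: "'a mat2 \<Rightarrow> 'v \<Rightarrow> 'v"
  assumes rep: "is_rep scale G \<rho>"
    and mult_closed: "\<And>g h. g \<in> G \<Longrightarrow> h \<in> G \<Longrightarrow> m2_mult g h \<in> G"
    and left_inverse: "\<And>g. g \<in> G \<Longrightarrow> \<exists>g'\<in>G. m2_mult g' g = m2_one"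
begin

sublocale vector_space scale
  using rep by (simp add: is_rep_def)

lemma rep_linear: "g \<in> G \<Longrightarrow> Vector_Spaces.linear scale scale (\<rho> g)"
  using rep by (simp add: is_rep_def)

lemma rep_hom: "g \<in> G \<Longrightarrow> module_hom scale scale (\<rho> g)"
  using rep_linear by (simp add: linear_iff_module_hom)

lemma rep_add: "g \<in> G \<Longrightarrow> \<rho> g (x + y) = \<rho> g x + \<rho> g y"
  by (rule module_hom.add[OF rep_hom])

lemma rep_scale: "g \<in> G \<Longrightarrow> \<rho> g (scale c x) = scale c (\<rho> g x)"
  by (rule module_hom.scale[OF rep_hom])

lemma rep_zero: "g \<in> G \<Longrightarrow> \<rho> g 0 = 0"
  by (rule module_hom.zero[OF rep_hom])

lemma rep_one [simp]: "\<rho> m2_one x = x"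
  using rep by (simp add: is_rep_def)

lemma rep_mult: "g \<in> G \<Longrightarrow> h \<in> G \<Longrightarrow> \<rho> (m2_mult g h) x = \<rho> g (\<rho> h x)"
  using rep by (simp add: is_rep_def)

lemma rep_inj:
  assumes "g \<in> G" shows "inj (\<rho> g)"
proof
  fix x y assume "\<rho> g x = \<rho> g y"
  moreover obtain g' where "g' \<in> G" "m2_mult g' g = m2_one"
    using left_inverse[OF assms] by blast
  ultimately show "x = y"
    using rep_mult[OF \<open>g' \<in> G\<close> assms] by (metis rep_one)
qed

lemma rep_eq_zero_iff: "g \<in> G \<Longrightarrow> \<rho> g x = 0 \<longleftrightarrow> x = 0"
  using injD[OF rep_inj] rep_zero by metis

lemma stable_subspace_iff:
  "stable_subspace scale H \<rho> W \<longleftrightarrow>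
     0 \<in> W \<and> (\<forall>x\<in>W. \<forall>y\<in>W. x + y \<in> W) \<and> (\<forall>c. \<forall>x\<in>W. scale c x \<in> W) \<and> (\<forall>h\<in>H. \<forall>w\<in>W. \<rho> h w \<in> W)"
  by (auto simp: stable_subspace_def subspace_def)

lemma stable_subspace_Union_chain:
  assumes "C \<noteq> {}" and stable: "\<And>A. A \<in> C \<Longrightarrow> stable_subspace scale H \<rho> A"
    and chain: "\<And>A B. A \<in> C \<Longrightarrow> B \<in> C \<Longrightarrow> A \<subseteq> B \<or> B \<subseteq> A"
  shows "stable_subspace scale H \<rho> (\<Union>C)"
  unfolding stable_subspace_iff
proof (intro conjI ballI allI)
  have sub: "\<And>A. A \<in> C \<Longrightarrow> subspace A"
    using stable by (simp add: stable_subspace_def)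
  obtain A where "A \<in> C" using \<open>C \<noteq> {}\<close> by blast
  then show "0 \<in> \<Union>C" using subspace_0[OF sub] by blast
  show "x + y \<in> \<Union>C" if xy: "x \<in> \<Union>C" "y \<in> \<Union>C" for x y
  proof -
    obtain A B where "A \<in> C" "B \<in> C" "x \<in> A" "y \<in> B" using xy by blast
    with chain[OF \<open>A \<in> C\<close> \<open>B \<in> C\<close>] show ?thesis
      using subspace_add[OF sub] by blast
  qed
  show "scale c x \<in> \<Union>C" if "x \<in> \<Union>C" for c x
    using that subspace_scale[OF sub] by blast
  show "\<rho> h w \<in> \<Union>C" if "h \<in> H" "w \<in> \<Union>C" for h w
    using that stable unfolding stable_subspace_def by blast
qed

end

locale irreducible_mat2_group_rep = mat2_group_rep scale G \<rho>
  for scale :: "'k::field \<Rightarrow> 'v::ab_group_add \<Rightarrow> 'v" and G :: "'a::field mat2 set" and \<rho> +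
  assumes irreducible: "irred_subrep scale G \<rho> UNIV"
begin

lemma stable_subspace_eq_UNIV: "stable_subspace scale G \<rho> W \<Longrightarrow> x \<in> W \<Longrightarrow> x \<noteq> 0 \<Longrightarrow> W = UNIV"
  using irreducible unfolding irred_subrep_def by (metis singletonD subset_UNIV)

lemma exists_nonzero: "\<exists>x::'v::ab_group_add. x \<noteq> 0"
proof -
  have "UNIV \<noteq> {0::'v}"
    using irreducible by (simp add: irred_subrep_def)
  then show ?thesis by blast
qed

lemma central_eigenvalue_is_scalar:
  assumes z: "z \<in> group_center G" and "y \<noteq> 0" "\<rho> z y = scale c y"
  shows "\<rho> z x = scale c x"
proof -
  have zG: "z \<in> G" using z by (rule group_center_subset)
  have "\<rho> g w \<in> {w. \<rho> z w = scale c w}" if "g \<in> G" "\<rho> z w = scale c w" for g w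
  proof -
    have "\<rho> z (\<rho> g w) = \<rho> g (\<rho> z w)"
      using group_center_commute[OF z that(1)] zG that(1) by (simp flip: rep_mult)
    then show ?thesis using that by (simp add: rep_scale)
  qed
  then have "stable_subspace scale G \<rho> {w. \<rho> z w = scale c w}"
    unfolding stable_subspace_iff using zG by (simp add: rep_add rep_scale rep_zero scale_right_distrib)
  then show ?thesis
    using stable_subspace_eq_UNIV assms(2,3) by blast
qed

lemma central_acts_by_nonzero_scalar:
  assumes alg_closed: "\<And>q :: 'k::field poly. degree q > 0 \<Longrightarrow> \<exists>r. poly q r = 0"
    and z: "z \<in> group_center G" and "N > 0" "x \<noteq> 0" "(\<rho> z ^^ N) x = x"
  shows "\<exists>c. c \<noteq> 0 \<and> (\<forall>w. \<rho> z w = scale c w)"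
proof -
  have zG: "z \<in> G" using z by (rule group_center_subset)
  obtain c y where "y \<noteq> 0" "\<rho> z y = scale c y"
    using eigenvector_if_periodic[OF rep_linear[OF zG] alg_closed assms(4,3,5)] by blast
  then have scalar: "\<rho> z w = scale c w" for w
    by (rule central_eigenvalue_is_scalar[OF z])
  have "c \<noteq> 0"
  proof
    assume "c = 0"
    then have "\<rho> z y = 0" using scalar[of y] by simp
    with \<open>y \<noteq> 0\<close> show False by (simp add: rep_eq_zero_iff[OF zG])
  qed
  with scalar show ?thesis by blast
qed

lemma has_central_character_if_periodic:
  assumes alg_closed: "\<And>q :: 'k::field poly. degree q > 0 \<Longrightarrow> \<exists>r. poly q r = 0"
    and periodic: "\<And>z. z \<in> group_center G \<Longrightarrow> \<exists>N>0. \<exists>x. x \<noteq> 0 \<and> (\<rho> z ^^ N) x = x"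
  shows "has_central_character scale G \<rho>"
proof -
  define \<chi> where "\<chi> z = (SOME c. c \<noteq> 0 \<and> (\<forall>w. \<rho> z w = scale c w))" for z
  have \<chi>: "\<chi> z \<noteq> 0 \<and> (\<forall>w. \<rho> z w = scale (\<chi> z) w)" if "z \<in> group_center G" for z
    unfolding \<chi>_def
    by (rule someI_ex) (use periodic[OF that] central_acts_by_nonzero_scalar[OF alg_closed that] in blast)
  have "\<chi> (m2_mult z z') = \<chi> z * \<chi> z'"
    if z: "z \<in> group_center G" and z': "z' \<in> group_center G" for z z'
  proof -
    obtain x :: "'v::ab_group_add" where "x \<noteq> 0" using exists_nonzero by blast
    have "scale (\<chi> (m2_mult z z')) x = \<rho> (m2_mult z z') x"
      using \<chi>[OF group_center_mult[OF mult_closed z z']] by simp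
    also have "\<dots> = scale (\<chi> z * \<chi> z') x"
      using \<chi>[OF z] \<chi>[OF z'] by (simp add: rep_mult group_center_subset z z' scale_scale)
    finally show ?thesis
      using scale_right_imp_eq[OF \<open>x \<noteq> 0\<close>] by blast
  qed
  with \<chi> show ?thesis
    unfolding has_central_character_def by blast
qed

end

section \<open>Restriction to a subgroup of index two modulo scalars\<close>

locale index_two_restriction = irreducible_mat2_group_rep scale G \<rho>
  for scale :: "'k::field \<Rightarrow> 'v::ab_group_add \<Rightarrow> 'v" and G :: "'a::field mat2 set" and \<rho> +
  fixes H :: "'a mat2 set" and t :: "'a mat2"
  assumes subgroup: "H \<subseteq> G" and t_mem: "t \<in> G"
    and normalizes: "\<And>h. h \<in> H \<Longrightarrow> \<exists>h'\<in>H. \<forall>x. \<rho> h (\<rho> t x) = \<rho> t (\<rho> h' x)"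
    and square: "\<exists>c h. h \<in> H \<and> (\<forall>x. \<rho> t (\<rho> t x) = scale c (\<rho> h x))"
    and cosets: "\<And>g. g \<in> G \<Longrightarrow> \<exists>c h. h \<in> H \<and>
                   ((\<forall>x. \<rho> g x = scale c (\<rho> h x)) \<or> (\<forall>x. \<rho> g x = scale c (\<rho> h (\<rho> t x))))"
begin

abbreviation H_stable :: "'v set \<Rightarrow> bool" where
  "H_stable W \<equiv> stable_subspace scale H \<rho> W"

lemma H_stable_subspace: "H_stable W \<Longrightarrow> subspace W"
  and H_stable_action: "H_stable W \<Longrightarrow> h \<in> H \<Longrightarrow> w \<in> W \<Longrightarrow> \<rho> h w \<in> W"
  by (simp_all add: stable_subspace_def)

lemma H_stableI: "subspace W \<Longrightarrow> (\<And>h w. h \<in> H \<Longrightarrow> w \<in> W \<Longrightarrow> \<rho> h w \<in> W) \<Longrightarrow> H_stable W"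
  by (simp add: stable_subspace_def)

lemma H_stable_image: "H_stable W \<Longrightarrow> H_stable (\<rho> t ` W)"
proof (rule H_stableI)
  assume W: "H_stable W"
  show "subspace (\<rho> t ` W)"
    using module_hom.subspace_image[OF rep_hom[OF t_mem] H_stable_subspace[OF W]] .
  fix h y assume "h \<in> H" "y \<in> \<rho> t ` W"
  then obtain w h' where "w \<in> W" "y = \<rho> t w" "h' \<in> H" "\<rho> h (\<rho> t w) = \<rho> t (\<rho> h' w)"
    using normalizes by blast
  then show "\<rho> h y \<in> \<rho> t ` W"
    using H_stable_action[OF W] by simp
qed

lemma H_stable_sum:
  assumes A: "H_stable A" and B: "H_stable B"
  shows "H_stable {a + b |a b. a \<in> A \<and> b \<in> B}"
proof (rule H_stableI)
  show "subspace {a + b |a b. a \<in> A \<and> b \<in> B}"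
    by (simp add: subspace_sums H_stable_subspace A B)
  fix h x assume h: "h \<in> H" and "x \<in> {a + b |a b. a \<in> A \<and> b \<in> B}"
  then obtain a b where "a \<in> A" "b \<in> B" "x = a + b" by blast
  moreover have "\<rho> h (a + b) = \<rho> h a + \<rho> h b"
    using h subgroup by (simp add: rep_add subset_iff)
  ultimately show "\<rho> h x \<in> {a + b |a b. a \<in> A \<and> b \<in> B}"
    using H_stable_action[OF A h] H_stable_action[OF B h] by auto
qed

lemma action_on_pair:
  assumes W: "H_stable W" and g: "g \<in> G"
  shows "(\<rho> g ` W \<subseteq> W \<and> \<rho> g ` \<rho> t ` W \<subseteq> \<rho> t ` W) \<or> (\<rho> g ` W \<subseteq> \<rho> t ` W \<and> \<rho> g ` \<rho> t ` W \<subseteq> W)"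
proof -
  have tW: "H_stable (\<rho> t ` W)" using H_stable_image[OF W] .
  obtain c h where h: "h \<in> H"
    and cases: "(\<forall>x. \<rho> g x = scale c (\<rho> h x)) \<or> (\<forall>x. \<rho> g x = scale c (\<rho> h (\<rho> t x)))"
    using cosets[OF g] by blast
  obtain c0 h0 where "h0 \<in> H" and t_square: "\<And>x. \<rho> t (\<rho> t x) = scale c0 (\<rho> h0 x)"
    using square by blast
  have hW: "\<rho> h w \<in> W" and hW_scaled: "scale c (\<rho> h w) \<in> W" if "w \<in> W" for w
    using H_stable_action[OF W h that] subspace_scale[OF H_stable_subspace[OF W]] by auto
  have htW: "scale c (\<rho> h y) \<in> \<rho> t ` W" if "y \<in> \<rho> t ` W" for y
    using H_stable_action[OF tW h that] subspace_scale[OF H_stable_subspace[OF tW]] by blast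
  from cases show ?thesis
  proof
    assume "\<forall>x. \<rho> g x = scale c (\<rho> h x)"
    then show ?thesis using hW_scaled htW by auto
  next
    assume act: "\<forall>x. \<rho> g x = scale c (\<rho> h (\<rho> t x))"
    have "scale c0 (\<rho> h0 w) \<in> W" if "w \<in> W" for w
      using H_stable_action[OF W \<open>h0 \<in> H\<close> that] subspace_scale[OF H_stable_subspace[OF W]] by blast
    then show ?thesis using act htW hW_scaled t_square by auto
  qed
qed

lemma G_stable_sum_with_image:
  assumes W: "H_stable W"
  shows "stable_subspace scale G \<rho> {a + b |a b. a \<in> W \<and> b \<in> \<rho> t ` W}"
  unfolding stable_subspace_def
proof (intro conjI ballI)
  show "subspace {a + b |a b. a \<in> W \<and> b \<in> \<rho> t ` W}"
    using H_stable_sum[OF W H_stable_image[OF W]] by (rule H_stable_subspace)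
  fix g x assume g: "g \<in> G" and "x \<in> {a + b |a b. a \<in> W \<and> b \<in> \<rho> t ` W}"
  then obtain a b where ab: "a \<in> W" "b \<in> \<rho> t ` W" "x = a + b" by blast
  then have gx: "\<rho> g x = \<rho> g a + \<rho> g b" "\<rho> g x = \<rho> g b + \<rho> g a"
    using g by (simp_all add: rep_add add.commute)
  from action_on_pair[OF W g] show "\<rho> g x \<in> {a + b |a b. a \<in> W \<and> b \<in> \<rho> t ` W}"
    using ab(1,2) gx by blast
qed

lemma G_stable_inter_with_image:
  assumes W: "H_stable W"
  shows "stable_subspace scale G \<rho> (W \<inter> \<rho> t ` W)"
  unfolding stable_subspace_def
proof (intro conjI ballI)
  show "subspace (W \<inter> \<rho> t ` W)"
    by (intro subspace_inter H_stable_subspace W H_stable_image)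
  fix g x assume "g \<in> G" "x \<in> W \<inter> \<rho> t ` W"
  with action_on_pair[OF W \<open>g \<in> G\<close>] show "\<rho> g x \<in> W \<inter> \<rho> t ` W"
    by blast
qed

lemma H_stable_eq_UNIV:
  assumes N: "H_stable N" and "x \<in> N" "\<rho> t x \<in> N" "x \<noteq> 0"
  shows "N = UNIV"
proof -
  define L where "L = {w \<in> N. \<forall>g\<in>G. \<rho> g w \<in> N}"
  have N_sub: "subspace N" using H_stable_subspace[OF N] .
  have "stable_subspace scale G \<rho> L"
    unfolding stable_subspace_def
  proof (intro conjI ballI)
    show "subspace L"
      unfolding L_def
      by (rule subspaceI) (simp_all add: rep_add rep_scale rep_zero subspace_0 subspace_add subspace_scale N_sub)
    show "\<rho> g w \<in> L" if "g \<in> G" "w \<in> L" for g w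
      using that mult_closed by (simp add: L_def flip: rep_mult)
  qed
  moreover have "x \<in> L"
  proof -
    have "\<rho> g x \<in> N" if g: "g \<in> G" for g
    proof -
      obtain c h where "h \<in> H"
        and "(\<forall>x. \<rho> g x = scale c (\<rho> h x)) \<or> (\<forall>x. \<rho> g x = scale c (\<rho> h (\<rho> t x)))"
        using cosets[OF g] by blast
      then show ?thesis
        using H_stable_action[OF N \<open>h \<in> H\<close>] subspace_scale[OF N_sub] assms(2,3) by auto
    qed
    then show ?thesis using assms(2) by (simp add: L_def)
  qed
  ultimately have "L = UNIV"
    using stable_subspace_eq_UNIV \<open>x \<noteq> 0\<close> by blast
  then show ?thesis
    unfolding L_def by blast
qed

text \<open>\<open>M\<close> is taken maximal, by Zorn's lemma, among the \<open>H\<close>-stable subspaces that do not contain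
  both \<open>x\<close> and \<open>t x\<close> for a fixed \<open>x \<noteq> 0\<close>.\<close>

lemma exists_maximal_proper_H_stable:
  "\<exists>M. H_stable M \<and> M \<noteq> UNIV \<and> (\<forall>X. H_stable X \<longrightarrow> M \<subset> X \<longrightarrow> X = UNIV)"
proof -
  obtain x :: 'v where "x \<noteq> 0" using exists_nonzero by blast
  define P where "P = {W. H_stable W \<and> \<not> (x \<in> W \<and> \<rho> t x \<in> W)}"
  have "H_stable {0}"
    by (rule H_stableI) (use subgroup in \<open>auto simp: rep_zero\<close>)
  then have "{0} \<in> P"
    using \<open>x \<noteq> 0\<close> by (simp add: P_def)
  moreover have "\<Union>C \<in> P" if "C \<noteq> {}" "subset.chain P C" for C
  proof -
    have CP: "C \<subseteq> P" and chain: "\<And>A B. A \<in> C \<Longrightarrow> B \<in> C \<Longrightarrow> A \<subseteq> B \<or> B \<subseteq> A"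
      using that(2) unfolding subset.chain_def by auto
    then have "H_stable (\<Union>C)"
      by (intro stable_subspace_Union_chain[OF \<open>C \<noteq> {}\<close>]) (auto simp: P_def)
    moreover have "\<not> (x \<in> \<Union>C \<and> \<rho> t x \<in> \<Union>C)"
    proof
      assume "x \<in> \<Union>C \<and> \<rho> t x \<in> \<Union>C"
      then obtain A B where "A \<in> C" "B \<in> C" "x \<in> A" "\<rho> t x \<in> B" by blast
      with chain[OF \<open>A \<in> C\<close> \<open>B \<in> C\<close>] CP show False by (auto simp: P_def)
    qed
    ultimately show ?thesis
      unfolding P_def by blast
  qed
  ultimately obtain M where M: "M \<in> P" and max: "\<And>X. X \<in> P \<Longrightarrow> M \<subseteq> X \<Longrightarrow> X = M"
    using subset_Zorn_nonempty[of P] by blast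
  have "X = UNIV" if X: "H_stable X" "M \<subset> X" for X
  proof (rule H_stable_eq_UNIV[OF X(1) _ _ \<open>x \<noteq> 0\<close>])
    have "X \<notin> P" using max[of X] X(2) by blast
    then show "x \<in> X" "\<rho> t x \<in> X"
      using X(1) by (auto simp: P_def)
  qed
  moreover have "H_stable M" "M \<noteq> UNIV"
    using M by (auto simp: P_def)
  ultimately show ?thesis by blast
qed

lemma irred_if_disjoint_from_maximal:
  assumes A: "H_stable A" and B: "H_stable B" and "B \<noteq> {0}"
    and disjoint: "A \<inter> B = {0}" and maximal: "\<And>X. H_stable X \<Longrightarrow> A \<subset> X \<Longrightarrow> X = UNIV"
  shows "irred_subrep scale H \<rho> B"
  unfolding irred_subrep_def
proof (intro conjI allI impI B \<open>B \<noteq> {0}\<close>)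
  fix U assume U: "H_stable U" and "U \<subseteq> B"
  have "U = B" if "U \<noteq> {0}"
  proof -
    obtain u where "u \<in> U" "u \<noteq> 0"
      using \<open>U \<noteq> {0}\<close> subspace_0[OF H_stable_subspace[OF U]] by blast
    then have "u \<notin> A" using disjoint \<open>U \<subseteq> B\<close> by blast
    moreover have "u \<in> {a + b |a b. a \<in> A \<and> b \<in> U}" "A \<subseteq> {a + b |a b. a \<in> A \<and> b \<in> U}"
      using \<open>u \<in> U\<close> subspace_0[OF H_stable_subspace[OF A]] subspace_0[OF H_stable_subspace[OF U]]
      by force+
    ultimately have sum_UNIV: "{a + b |a b. a \<in> A \<and> b \<in> U} = UNIV"
      using maximal[OF H_stable_sum[OF A U]] by blast
    have "y \<in> U" if y: "y \<in> B" for y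
    proof -
      obtain a u' where "a \<in> A" "u' \<in> U" "y = a + u'"
        using sum_UNIV by blast
      then have "a \<in> B"
        using y \<open>U \<subseteq> B\<close> subspace_diff[OF H_stable_subspace[OF B]] by (metis add_diff_cancel_right' subsetD)
      then have "a = 0" using \<open>a \<in> A\<close> disjoint by blast
      then show ?thesis using \<open>u' \<in> U\<close> \<open>y = a + u'\<close> by simp
    qed
    then show "U = B" using \<open>U \<subseteq> B\<close> by blast
  qed
  then show "U = {0} \<or> U = B" by blast
qed

lemma irred_of_irred_image:
  assumes W: "H_stable W" and irred: "irred_subrep scale H \<rho> (\<rho> t ` W)"
  shows "irred_subrep scale H \<rho> W"
  unfolding irred_subrep_def
proof (intro conjI allI impI W)
  show "W \<noteq> {0}"
    using irred rep_zero[OF t_mem] by (auto simp: irred_subrep_def)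
  fix U assume U: "H_stable U" and "U \<subseteq> W"
  then have "\<rho> t ` U = {0} \<or> \<rho> t ` U = \<rho> t ` W"
    using irred_subrepD[OF irred H_stable_image[OF U]] by (simp add: image_mono)
  moreover have "U = {0}" if "\<rho> t ` U = {0}"
  proof -
    have "u = 0" if "u \<in> U" for u
      using \<open>\<rho> t ` U = {0}\<close> that rep_eq_zero_iff[OF t_mem] by blast
    then show ?thesis
      using subspace_0[OF H_stable_subspace[OF U]] by blast
  qed
  ultimately show "U = {0} \<or> U = W"
    using inj_image_eq_iff[OF rep_inj[OF t_mem]] by metis
qed

lemma irred_UNIV_if_maximal_image_subset:
  assumes M: "H_stable M" "M \<noteq> UNIV" and maximal: "\<And>X. H_stable X \<Longrightarrow> M \<subset> X \<Longrightarrow> X = UNIV"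
    and "\<rho> t ` M \<subseteq> M"
  shows "irred_subrep scale H \<rho> UNIV"
proof -
  have M0: "0 \<in> M" using subspace_0[OF H_stable_subspace[OF M(1)]] .
  have "\<rho> g w \<in> M" if "g \<in> G" "w \<in> M" for g w
    using action_on_pair[OF M(1) that(1)] \<open>\<rho> t ` M \<subseteq> M\<close> that(2) by blast
  then have GM: "stable_subspace scale G \<rho> M"
    using H_stable_subspace[OF M(1)] by (simp add: stable_subspace_def)
  have "m = 0" if "m \<in> M" for m
    using stable_subspace_eq_UNIV[OF GM that] M(2) by blast
  then have "M = {0}" using M0 by blast
  show ?thesis
    unfolding irred_subrep_def
  proof (intro conjI allI impI)
    show "H_stable UNIV" by (rule H_stableI) simp_all
    show "UNIV \<noteq> {0::'v}" using exists_nonzero by blast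
    fix U :: "'v set" assume "H_stable U" "U \<subseteq> UNIV"
    then show "U = {0} \<or> U = UNIV"
      using maximal \<open>M = {0}\<close> subspace_0[OF H_stable_subspace] by blast
  qed
qed

lemma direct_sum_if_maximal_image_not_subset:
  assumes M: "H_stable M" "M \<noteq> UNIV" and maximal: "\<And>X. H_stable X \<Longrightarrow> M \<subset> X \<Longrightarrow> X = UNIV"
    and "m \<in> M" "\<rho> t m \<notin> M"
  shows "irred_subrep scale H \<rho> M" "irred_subrep scale H \<rho> (\<rho> t ` M)"
    and "M \<inter> \<rho> t ` M = {0}" "\<And>x. \<exists>a\<in>M. \<exists>b\<in>\<rho> t ` M. x = a + b"
proof -
  have M0: "0 \<in> M" using subspace_0[OF H_stable_subspace[OF M(1)]] .
  have "\<rho> t m \<noteq> 0" using \<open>\<rho> t m \<notin> M\<close> M0 by auto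
  have tM: "H_stable (\<rho> t ` M)" using H_stable_image[OF M(1)] .
  have "\<rho> t m \<in> {a + b |a b. a \<in> M \<and> b \<in> \<rho> t ` M}"
    using \<open>m \<in> M\<close> M0 by force
  then have "{a + b |a b. a \<in> M \<and> b \<in> \<rho> t ` M} = UNIV"
    by (rule stable_subspace_eq_UNIV[OF G_stable_sum_with_image[OF M(1)] _ \<open>\<rho> t m \<noteq> 0\<close>])
  then show spanning: "\<And>x. \<exists>a\<in>M. \<exists>b\<in>\<rho> t ` M. x = a + b" by blast
  have "x = 0" if "x \<in> M \<inter> \<rho> t ` M" for x
    using stable_subspace_eq_UNIV[OF G_stable_inter_with_image[OF M(1)] that] M(2) by blast
  then show disjoint: "M \<inter> \<rho> t ` M = {0}"
    using M0 subspace_0[OF H_stable_subspace[OF tM]] by blast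
  have "\<rho> t ` M \<noteq> {0}" using \<open>m \<in> M\<close> \<open>\<rho> t m \<noteq> 0\<close> by blast
  then show "irred_subrep scale H \<rho> (\<rho> t ` M)"
    using irred_if_disjoint_from_maximal[OF M(1) tM _ disjoint maximal] by blast
  then show "irred_subrep scale H \<rho> M"
    by (rule irred_of_irred_image[OF M(1)])
qed

theorem restriction_semisimple_length_le2: "semisimple_length_le2 scale H \<rho>"
proof -
  obtain M where M: "H_stable M" "M \<noteq> UNIV"
    and maximal: "\<And>X. H_stable X \<Longrightarrow> M \<subset> X \<Longrightarrow> X = UNIV"
    using exists_maximal_proper_H_stable by blast
  show ?thesis
  proof (cases "\<rho> t ` M \<subseteq> M")
    case True
    then show ?thesis
      using irred_UNIV_if_maximal_image_subset[OF M maximal]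
      unfolding semisimple_length_le2_def by blast
  next
    case False
    then obtain m where "m \<in> M" "\<rho> t m \<notin> M" by blast
    note direct_sum = direct_sum_if_maximal_image_not_subset[OF M maximal this]
    show ?thesis
      unfolding semisimple_length_le2_def
      by (intro disjI2, rule exI[of _ M], rule exI[of _ "\<rho> t ` M"]) (intro conjI allI direct_sum)
  qed
qed

end

section \<open>Discretely valued fields\<close>

locale discretely_valued_field =
  fixes v :: "'e::field \<Rightarrow> int"
  assumes discrete_valuation: "discrete_valuation v"
begin

lemma v_mult: "x \<noteq> 0 \<Longrightarrow> y \<noteq> 0 \<Longrightarrow> v (x * y) = v x + v y"
  using discrete_valuation unfolding discrete_valuation_def by blast

lemma v_add: "x \<noteq> 0 \<Longrightarrow> y \<noteq> 0 \<Longrightarrow> x + y \<noteq> 0 \<Longrightarrow> min (v x) (v y) \<le> v (x + y)"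
  using discrete_valuation unfolding discrete_valuation_def by blast

lemma v_one [simp]: "v 1 = 0"
  using v_mult[of 1 1] by simp

lemma v_minus [simp]: "v (- x) = v x"
proof (cases "x = 0")
  case False
  have "v (- 1) = 0" using v_mult[of "- 1" "- 1"] by simp
  with False show ?thesis using v_mult[of "- 1" x] by simp
qed simp

lemma v_inverse: "x \<noteq> 0 \<Longrightarrow> v (inverse x) = - v x"
  using v_mult[of x "inverse x"] by simp

lemma v_divide: "x \<noteq> 0 \<Longrightarrow> y \<noteq> 0 \<Longrightarrow> v (x / y) = v x - v y"
  by (simp add: divide_inverse v_mult v_inverse)

lemma v_power: "x \<noteq> 0 \<Longrightarrow> v (x ^ n) = int n * v x"
  by (induction n) (simp_all add: v_mult algebra_simps)

lemma val_ge_0 [simp]: "val_ge v n 0"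
  by (simp add: val_ge_def)

lemma val_ge_mono: "val_ge v m x \<Longrightarrow> n \<le> m \<Longrightarrow> val_ge v n x"
  by (auto simp: val_ge_def)

lemma val_ge_add:
  assumes "val_ge v n x" "val_ge v n y" shows "val_ge v n (x + y)"
proof (cases "x = 0 \<or> y = 0 \<or> x + y = 0")
  case False
  then have "min (v x) (v y) \<le> v (x + y)" using v_add by blast
  then show ?thesis using assms False by (auto simp: val_ge_def)
qed (use assms in \<open>auto simp: val_ge_def\<close>)

lemma val_ge_minus [simp]: "val_ge v n (- x) = val_ge v n x"
  by (simp add: val_ge_def)

lemma val_ge_diff: "val_ge v n x \<Longrightarrow> val_ge v n y \<Longrightarrow> val_ge v n (x - y)"
  using val_ge_add[of n x "- y"] by simp

lemma val_ge_diff_commute: "val_ge v n (x - y) \<longleftrightarrow> val_ge v n (y - x)"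
  using val_ge_minus[of n "x - y"] by simp

lemma val_ge_diff_trans: "val_ge v n (x - y) \<Longrightarrow> val_ge v n (y - z) \<Longrightarrow> val_ge v n (x - z)"
  using val_ge_add[of n "x - y" "y - z"] by simp

lemma val_ge_mult: "val_ge v m x \<Longrightarrow> val_ge v n y \<Longrightarrow> val_ge v (m + n) (x * y)"
  by (cases "x = 0 \<or> y = 0") (auto simp: val_ge_def v_mult)

lemma val_ge_mult_integral: "val_ge v 0 x \<Longrightarrow> val_ge v n y \<Longrightarrow> val_ge v n (x * y)"
  using val_ge_mult[of 0 x n y] by simp

lemma val_ge_power: "val_ge v n x \<Longrightarrow> val_ge v (int k * n) (x ^ k)"
proof (induction k)
  case (Suc k)
  then have "val_ge v (n + int k * n) (x * x ^ k)" using val_ge_mult by blast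
  then show ?case by (simp add: algebra_simps)
qed (simp add: val_ge_def)

lemma val_ge_sum: "(\<And>i. i \<in> A \<Longrightarrow> val_ge v n (f i)) \<Longrightarrow> val_ge v n (sum f A)"
  by (induction A rule: infinite_finite_induct) (auto intro: val_ge_add)

lemma val_ge_of_nat: "val_ge v 0 (of_nat k)"
proof (induction k)
  case (Suc k)
  then show ?case
    using val_ge_add[OF _ Suc, of 1] by (simp add: val_ge_def add.commute)
qed simp

lemma val_ge_eq_0:
  assumes "\<And>n. n \<ge> 0 \<Longrightarrow> val_ge v n x" shows "x = 0"
proof (rule ccontr)
  assume "x \<noteq> 0"
  moreover have "val_ge v (max 0 (v x + 1)) x" using assms by simp
  ultimately show False by (simp add: val_ge_def)
qed

lemma val_ge_unit_mult_cancel: "u \<noteq> 0 \<Longrightarrow> v u = 0 \<Longrightarrow> val_ge v n (u * x) \<Longrightarrow> val_ge v n x"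
  by (cases "x = 0") (auto simp: val_ge_def v_mult)

lemma val_ge_1_mult: "val_ge v 0 a \<Longrightarrow> val_ge v 0 b \<Longrightarrow> val_ge v 1 (a * b) \<Longrightarrow> val_ge v 1 a \<or> val_ge v 1 b"
  by (cases "a = 0 \<or> b = 0") (auto simp: val_ge_def v_mult)

lemma val_ge_1_mult_compat:
  assumes "val_ge v 0 x" "val_ge v 0 y'" "val_ge v 1 (x - x')" "val_ge v 1 (y - y')"
  shows "val_ge v 1 (x * y - x' * y')"
proof -
  have "val_ge v 1 (x * (y - y') + y' * (x - x'))"
    using assms by (intro val_ge_add val_ge_mult_integral)
  then show ?thesis by (simp add: algebra_simps)
qed

lemma square_eq_if_limit:
  assumes y0: "\<And>n. val_ge v 0 (y n)"
    and limit: "\<forall>N. \<exists>M. \<forall>n\<ge>M. val_ge v N (y n - L)"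
    and squares: "\<And>n. val_ge v (int n + 1) (y n ^ 2 - x)"
  shows "L ^ 2 = x"
proof -
  have "val_ge v N (L ^ 2 - x)" if "N \<ge> 0" for N
  proof -
    obtain M where M: "\<And>n. n \<ge> M \<Longrightarrow> val_ge v N (y n - L)" using limit by blast
    define n where "n = max M (nat N)"
    have yL: "val_ge v N (L - y n)"
      using M[of n] val_ge_diff_commute by (simp add: n_def)
    have "val_ge v 0 (L + y n)"
      using val_ge_add[OF val_ge_mono[OF yL that] val_ge_mult_integral[OF val_ge_of_nat[of 2] y0[of n]]]
      by (simp add: algebra_simps)
    then have "val_ge v N ((L - y n) * (L + y n))"
      using val_ge_mult[OF yL] by fastforce
    moreover have "val_ge v N (y n ^ 2 - x)"
      using squares[of n] by (rule val_ge_mono) (simp add: n_def)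
    ultimately have "val_ge v N ((L - y n) * (L + y n) + (y n ^ 2 - x))"
      by (rule val_ge_add)
    then show ?thesis by (simp add: algebra_simps power2_eq_square)
  qed
  then show ?thesis using val_ge_eq_0 by force
qed

definition val_units :: "'e set" where
  "val_units = {x. x \<noteq> 0 \<and> v x = 0}"

lemma val_units_mult: "x \<in> val_units \<Longrightarrow> y \<in> val_units \<Longrightarrow> x * y \<in> val_units"
  and val_units_minus: "x \<in> val_units \<Longrightarrow> - x \<in> val_units"
  and val_units_inverse: "x \<in> val_units \<Longrightarrow> inverse x \<in> val_units"
  and val_units_power2: "x \<in> val_units \<Longrightarrow> x ^ 2 \<in> val_units"
  and val_units_val_ge_0: "x \<in> val_units \<Longrightarrow> val_ge v 0 x"
  and val_units_not_val_ge_1: "x \<in> val_units \<Longrightarrow> \<not> val_ge v 1 x"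
  by (simp_all add: val_units_def v_mult v_inverse val_ge_def power2_eq_square)

definition residue_class :: "'e \<Rightarrow> 'e set" where
  "residue_class x = {y \<in> val_units. val_ge v 1 (y - x)}"

lemma residue_class_eq_iff:
  assumes "x \<in> val_units" "y \<in> val_units"
  shows "residue_class x = residue_class y \<longleftrightarrow> val_ge v 1 (x - y)"
proof
  assume "residue_class x = residue_class y"
  moreover have "x \<in> residue_class x"
    using assms(1) by (simp add: residue_class_def)
  ultimately show "val_ge v 1 (x - y)"
    by (simp add: residue_class_def)
next
  assume xy: "val_ge v 1 (x - y)"
  then have yx: "val_ge v 1 (y - x)" by (simp add: val_ge_diff_commute)
  have "val_ge v 1 (z - x) \<longleftrightarrow> val_ge v 1 (z - y)" for z
    using val_ge_diff_trans[OF _ xy, of z] val_ge_diff_trans[OF _ yx, of z] by blast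
  then show "residue_class x = residue_class y"
    unfolding residue_class_def by blast
qed

definition residue_square :: "'e \<Rightarrow> bool" where
  "residue_square c \<longleftrightarrow> (\<exists>t\<in>val_units. val_ge v 1 (c - t ^ 2))"

lemma residue_class_square_eq_iff:
  assumes t: "t \<in> val_units" and u: "u \<in> val_units"
  shows "residue_class (t ^ 2) = residue_class (u ^ 2) \<longleftrightarrow>
           residue_class t = residue_class u \<or> residue_class t = residue_class (- u)"
proof
  assume "residue_class (t ^ 2) = residue_class (u ^ 2)"
  then have "val_ge v 1 ((t - u) * (t + u))"
    using residue_class_eq_iff val_units_power2 t u by (simp add: algebra_simps power2_eq_square)
  moreover have "val_ge v 0 (t - u)" "val_ge v 0 (t + u)"
    using t u by (simp_all add: val_units_val_ge_0 val_ge_diff val_ge_add)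
  ultimately have "val_ge v 1 (t - u) \<or> val_ge v 1 (t - - u)"
    using val_ge_1_mult by fastforce
  then show "residue_class t = residue_class u \<or> residue_class t = residue_class (- u)"
    using residue_class_eq_iff t u val_units_minus by blast
next
  assume "residue_class t = residue_class u \<or> residue_class t = residue_class (- u)"
  then obtain w where w: "w \<in> val_units" "w ^ 2 = u ^ 2" "val_ge v 1 (t - w)"
    using residue_class_eq_iff t u val_units_minus by (metis power2_minus)
  then have "val_ge v 1 (t * t - w * w)"
    using val_ge_1_mult_compat val_units_val_ge_0 t by blast
  then have "val_ge v 1 (t ^ 2 - u ^ 2)"
    using w(2) by (simp add: power2_eq_square)
  then show "residue_class (t ^ 2) = residue_class (u ^ 2)"
    using residue_class_eq_iff[OF val_units_power2[OF t] val_units_power2[OF u]] by simp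
qed

definition residue_class_mult :: "'e \<Rightarrow> 'e set \<Rightarrow> 'e set" where
  "residue_class_mult a C = {y \<in> val_units. \<exists>c\<in>C. val_ge v 1 (y - a * c)}"

lemma residue_class_mult:
  assumes "a \<in> val_units" "t \<in> val_units"
  shows "residue_class_mult a (residue_class t) = residue_class (a * t)"
proof
  show "residue_class_mult a (residue_class t) \<subseteq> residue_class (a * t)"
  proof
    fix y assume "y \<in> residue_class_mult a (residue_class t)"
    then obtain c where c: "y \<in> val_units" "c \<in> val_units" "val_ge v 1 (c - t)" "val_ge v 1 (y - a * c)"
      by (auto simp: residue_class_mult_def residue_class_def)
    have "val_ge v 1 (a * c - a * t)"
      using val_ge_1_mult_compat[of a t a c] c assms val_units_val_ge_0 by simp
    then show "y \<in> residue_class (a * t)"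
      using c val_ge_diff_trans by (auto simp: residue_class_def)
  qed
  show "residue_class (a * t) \<subseteq> residue_class_mult a (residue_class t)"
    using assms unfolding residue_class_mult_def residue_class_def by fastforce
qed

lemma residue_square_iff:
  "c \<in> val_units \<Longrightarrow> residue_square c \<longleftrightarrow> residue_class c \<in> (\<lambda>t. residue_class (t ^ 2)) ` val_units"
  unfolding residue_square_def using residue_class_eq_iff val_units_power2 by blast

lemma residue_square_cancel_square:
  assumes t: "t \<in> val_units" and "residue_square (a * t ^ 2)"
  shows "residue_square a"
proof -
  obtain u where u: "u \<in> val_units" "val_ge v 1 (a * t ^ 2 - u ^ 2)"
    using assms(2) by (auto simp: residue_square_def)
  have it: "inverse t \<in> val_units" using val_units_inverse t .
  then have "val_ge v 1 ((inverse t) ^ 2 * (a * t ^ 2 - u ^ 2))"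
    using val_ge_mult_integral val_units_val_ge_0 val_units_power2 u(2) by blast
  moreover have "(inverse t) ^ 2 * (a * t ^ 2 - u ^ 2) = a - (u * inverse t) ^ 2"
    using t by (simp add: val_units_def field_simps power2_eq_square)
  ultimately show ?thesis
    unfolding residue_square_def using val_units_mult[OF u(1) it] by auto
qed

lemma inj_on_residue_class_mult:
  assumes a: "a \<in> val_units"
  shows "inj_on (residue_class_mult a) (residue_class ` val_units)"
proof
  fix C D assume "C \<in> residue_class ` val_units" "D \<in> residue_class ` val_units"
    and eq: "residue_class_mult a C = residue_class_mult a D"
  then obtain s t where st: "s \<in> val_units" "t \<in> val_units" "C = residue_class s" "D = residue_class t"
    by blast
  then have "val_ge v 1 (a * s - a * t)"
    using eq residue_class_mult a residue_class_eq_iff val_units_mult by metis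
  then have "val_ge v 1 (inverse a * (a * s - a * t))"
    using val_ge_mult_integral val_units_val_ge_0 val_units_inverse a by blast
  moreover have "inverse a * (a * s - a * t) = s - t"
    using a by (simp add: val_units_def field_simps)
  ultimately show "C = D"
    using st residue_class_eq_iff by simp
qed

end

locale odd_local_field = discretely_valued_field v
  for v :: "'e::field \<Rightarrow> int" +
  fixes p :: nat
  assumes prime: "prime p" and odd: "odd p"
    and complete: "val_complete v"
    and finite_residue_field: "finite_residue_field v UNIV"
    and p_in_ideal: "of_nat p \<in> val_ideal v"
begin

lemma val_ge_p: "val_ge v 1 (of_nat p)"
  using p_in_ideal by (simp add: val_ideal_def)

lemma two_unit: "(2::'e) \<noteq> 0" "v 2 = 0"
proof -
  obtain k where p: "p = 2 * k + 1" using odd oddE by blast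
  have "\<not> val_ge v 1 (2::'e)"
  proof
    assume "val_ge v 1 (2::'e)"
    then have "val_ge v 1 (2 * of_nat k :: 'e)"
      using val_ge_mult[OF _ val_ge_of_nat] by fastforce
    then have "val_ge v 1 (of_nat p - 2 * of_nat k :: 'e)"
      using val_ge_diff val_ge_p by blast
    then show False by (simp add: p val_ge_def)
  qed
  moreover have "val_ge v 0 (2::'e)" using val_ge_of_nat[of 2] by simp
  ultimately show "(2::'e) \<noteq> 0" "v 2 = 0" by (auto simp: val_ge_def)
qed

lemma power_p_congruence:
  assumes k: "k \<ge> 1" and y: "val_ge v k y"
  shows "val_ge v (k + 1) ((1 + y) ^ p - 1)"
proof -
  have "(1 + y) ^ p - 1 = (\<Sum>i\<in>{1..p}. of_nat (p choose i) * y ^ i)"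
  proof -
    have "{..p} = insert 0 {1..p}" by auto
    then show ?thesis
      using binomial_ring[of y 1 p] by (simp add: add.commute)
  qed
  also have "val_ge v (k + 1) \<dots>"
  proof (rule val_ge_sum)
    fix i assume i: "i \<in> {1..p}"
    have yi: "val_ge v (int i * k) (y ^ i)" using val_ge_power[OF y] .
    show "val_ge v (k + 1) (of_nat (p choose i) * y ^ i)"
    proof (cases "i = p")
      case True
      have "int p * k \<ge> 2 * k" using prime_ge_2_nat[OF prime] k by (intro mult_right_mono) auto
      then have "int p * k \<ge> k + 1" using k by linarith
      then show ?thesis using yi True val_ge_mult_integral[OF val_ge_of_nat] val_ge_mono by blast
    next
      case False
      then have "p dvd (p choose i)" using i dvd_choose_prime[of i p] prime by auto
      then obtain c where c: "p choose i = p * c" by blast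
      have "val_ge v (1 + int i * k) (of_nat p * of_nat c * y ^ i)"
        using val_ge_mult[OF val_ge_mult_integral[OF val_ge_of_nat val_ge_p, unfolded mult.commute[of _ "of_nat p"]] yi]
        by (simp add: mult.commute)
      moreover have "1 + int i * k \<ge> k + 1" using i k by (simp add: mult_le_cancel_right1)
      ultimately show ?thesis by (simp add: c val_ge_mono)
    qed
  qed
  finally show ?thesis .
qed

lemma power_p_power_congruence:
  assumes "val_ge v 1 (w - 1)"
  shows "val_ge v (int m + 1) (w ^ (p ^ m) - 1)"
proof (induction m)
  case (Suc m)
  have "val_ge v (int m + 1 + 1) ((1 + (w ^ (p ^ m) - 1)) ^ p - 1)"
    using power_p_congruence[OF _ Suc] by simp
  moreover have "w ^ (p ^ Suc m) = (w ^ (p ^ m)) ^ p"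
    by (simp add: power_mult[symmetric] mult.commute)
  ultimately show ?case by (simp add: algebra_simps)
qed (use assms in simp)

lemma val_ge_power_minus_one:
  assumes "val_ge v n (w - 1)" "n \<ge> 0"
  shows "val_ge v n (w ^ k - 1)"
proof (induction k)
  case (Suc k)
  have "val_ge v 0 w"
    using val_ge_add[OF val_ge_mono[OF assms] val_ge_of_nat[of 1]] by simp
  then have "val_ge v 0 (w ^ k)"
    using val_ge_power[of 0 w k] by simp
  then have "val_ge v n (w ^ k * (w - 1) + (w ^ k - 1))"
    using val_ge_add[OF val_ge_mult_integral[OF _ assms(1)] Suc] by simp
  then show ?case by (simp add: algebra_simps)
qed simp

lemma unit_power_congruent_one_mod_ideal:
  assumes "u \<noteq> 0" "v u = 0"
  shows "\<exists>M>0. val_ge v 1 (u ^ M - 1)"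
proof -
  obtain R where R: "finite R" "\<And>x. x \<in> val_ring v \<Longrightarrow> \<exists>r\<in>R. x - r \<in> val_ideal v"
    using finite_residue_field unfolding finite_residue_field_def by auto
  have "u ^ i \<in> val_ring v" for i
    using assms by (simp add: val_ring_def val_ge_def v_power)
  then have "\<forall>i. \<exists>r. r \<in> R \<and> val_ge v 1 (u ^ i - r)"
    using R(2) unfolding val_ideal_def by blast
  then obtain f where f: "\<And>i. f i \<in> R \<and> val_ge v 1 (u ^ i - f i)"
    by metis
  have "\<not> inj_on f {..card R}"
  proof
    assume "inj_on f {..card R}"
    then have "card (f ` {..card R}) = card R + 1" by (simp add: card_image)
    moreover have "card (f ` {..card R}) \<le> card R"
      using f by (intro card_mono[OF R(1)]) auto
    ultimately show False by simp
  qed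
  then obtain i j where ij: "i < j" "f i = f j"
    unfolding inj_on_def by (metis linorder_neqE_nat)
  have "val_ge v 1 ((u ^ j - f j) - (u ^ i - f i))"
    using f by (blast intro: val_ge_diff)
  moreover have "u ^ j = u ^ i * u ^ (j - i)"
    using ij by (simp flip: power_add)
  ultimately have "val_ge v 1 (u ^ i * (u ^ (j - i) - 1))"
    using ij(2) by (simp add: algebra_simps)
  then have "val_ge v 1 (u ^ (j - i) - 1)"
    using val_ge_unit_mult_cancel[of "u ^ i"] assms by (simp add: v_power)
  then show ?thesis using ij by (intro exI[of _ "j - i"]) auto
qed

lemma unit_power_congruent_one:
  assumes "u \<noteq> 0" "v u = 0"
  shows "\<exists>N>0. val_ge v (int n) (u ^ N - 1)"
proof -
  obtain M where "M > 0" "val_ge v 1 (u ^ M - 1)"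
    using unit_power_congruent_one_mod_ideal[OF assms] by blast
  then have "val_ge v (int n + 1) ((u ^ M) ^ (p ^ n) - 1)"
    by (intro power_p_power_congruence)
  then have "val_ge v (int n) ((u ^ M) ^ (p ^ n) - 1)"
    by (rule val_ge_mono) simp
  moreover have "M * p ^ n > 0"
    using \<open>M > 0\<close> prime_gt_0_nat[OF prime] by simp
  ultimately show ?thesis
    by (metis power_mult)
qed

lemma exists_limit_if_differences_shrink:
  assumes step: "\<And>m. val_ge v (int m + 1) (y (Suc m) - y m)"
  shows "\<exists>L. \<forall>N. \<exists>M. \<forall>n\<ge>M. val_ge v N (y n - L)"
proof -
  have tail: "val_ge v (int M + 1) (y m - y M)" if "m \<ge> M" for m M
    using that
  proof (induction m rule: dec_induct)
    case (step m)
    have "val_ge v (int M + 1) (y (Suc m) - y m)"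
      using val_ge_mono[OF assms] step(1) by simp
    then show ?case using val_ge_diff_trans step(3) by blast
  qed simp
  have "\<exists>M. \<forall>m\<ge>M. \<forall>n\<ge>M. val_ge v N (y m - y n)" for N
  proof (intro exI allI impI)
    fix m n assume "m \<ge> nat N" "n \<ge> nat N"
    then have "val_ge v (int (nat N) + 1) (y m - y (nat N) - (y n - y (nat N)))"
      using tail val_ge_diff by blast
    then show "val_ge v N (y m - y n)" by (auto intro: val_ge_mono)
  qed
  then show ?thesis
    using complete unfolding val_complete_def by blast
qed

text \<open>A square root of a principal unit \<open>x\<close> is the limit of \<open>x ^ ((p ^ m + 1) div 2)\<close>,
  as \<open>x ^ (p ^ m)\<close> tends to \<open>1\<close>.\<close>

lemma exists_sqrt_principal_unit:
  assumes x1: "val_ge v 1 (x - 1)"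
  shows "\<exists>y. y ^ 2 = x"
proof -
  define h where "h = (p - 1) div 2"
  define e where "e m = (p ^ m + 1) div 2" for m
  define y where "y m = x ^ e m" for m
  have e2: "2 * e m = p ^ m + 1" for m
    using odd unfolding e_def by (simp add: odd_pos)
  have p: "p = 2 * h + 1"
    using odd prime_ge_2_nat[OF prime] unfolding h_def by presburger
  have e_Suc: "e (Suc m) = e m + p ^ m * h" for m
    using e2[of m] e2[of "Suc m"] by (simp add: p algebra_simps)
  have x0: "val_ge v 0 x"
    using val_ge_add[OF val_ge_mono[OF x1] val_ge_of_nat[of 1]] by simp
  have y0: "val_ge v 0 (y m)" for m
    unfolding y_def using val_ge_power[OF x0, of "e m"] by simp
  have close: "val_ge v (int m + 1) (x ^ (p ^ m) - 1)" for m
    by (rule power_p_power_congruence[OF x1])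
  have step: "val_ge v (int m + 1) (y (Suc m) - y m)" for m
  proof -
    have "y (Suc m) = y m * (x ^ (p ^ m)) ^ h"
      by (simp add: y_def e_Suc power_add flip: power_mult)
    then have "y (Suc m) - y m = y m * ((x ^ (p ^ m)) ^ h - 1)"
      by (simp add: algebra_simps)
    then show ?thesis
      using val_ge_mult_integral[OF y0 val_ge_power_minus_one[OF close]] by simp
  qed
  have squares: "val_ge v (int n + 1) (y n ^ 2 - x)" for n
  proof -
    have "y n ^ 2 - x = x * (x ^ (p ^ n) - 1)"
      using e2[of n] by (simp add: y_def algebra_simps flip: power_mult power_add)
    then show ?thesis
      using val_ge_mult_integral[OF x0 close] by simp
  qed
  obtain L where "\<forall>N. \<exists>M. \<forall>n\<ge>M. val_ge v N (y n - L)"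
    using exists_limit_if_differences_shrink[OF step] by blast
  then show ?thesis
    using square_eq_if_limit[OF y0 _ squares] by blast
qed

lemma finite_unit_classes: "finite (residue_class ` val_units)"
proof -
  obtain R where R: "finite R" "R \<subseteq> val_ring v"
    "\<And>x. x \<in> val_ring v \<Longrightarrow> \<exists>r\<in>R. x - r \<in> val_ideal v"
    using finite_residue_field unfolding finite_residue_field_def by auto
  have "residue_class ` val_units \<subseteq> residue_class ` R"
  proof
    fix C assume "C \<in> residue_class ` val_units"
    then obtain x where x: "x \<in> val_units" "C = residue_class x" by blast
    then obtain r where r: "r \<in> R" "val_ge v 1 (x - r)"
      using R(3) val_units_val_ge_0 by (auto simp: val_ring_def val_ideal_def)
    have "r \<in> val_units"
    proof (rule ccontr)
      assume "r \<notin> val_units"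
      then have "val_ge v 1 r"
        using r R(2) by (auto simp: val_units_def val_ring_def val_ge_def)
      then have "val_ge v 1 ((x - r) + r)" using r val_ge_add by blast
      then show False using val_units_not_val_ge_1[OF x(1)] by simp
    qed
    then show "C \<in> residue_class ` R"
      using x r residue_class_eq_iff by blast
  qed
  then show ?thesis using R(1) finite_subset by blast
qed

text \<open>Here \<open>p\<close> odd is used: \<open>2\<close> is a unit, so \<open>u\<close> and \<open>- u\<close> lie in different classes.\<close>

lemma residue_class_minus_neq:
  assumes u: "u \<in> val_units"
  shows "residue_class u \<noteq> residue_class (- u)"
proof
  assume "residue_class u = residue_class (- u)"
  then have "val_ge v 1 (2 * u)"
    using residue_class_eq_iff u val_units_minus by fastforce
  moreover have "2 * u \<in> val_units"
    using u two_unit by (simp add: val_units_def v_mult)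
  ultimately show False using val_units_not_val_ge_1 by blast
qed

lemma card_unit_classes:
  "card (residue_class ` val_units) = 2 * card ((\<lambda>t. residue_class (t ^ 2)) ` val_units)"
proof -
  let ?Q = "residue_class ` val_units" and ?S = "(\<lambda>t. residue_class (t ^ 2)) ` val_units"
  define roots where "roots s = residue_class ` {t \<in> val_units. residue_class (t ^ 2) = s}" for s
  have roots: "roots (residue_class (u ^ 2)) = {residue_class u, residue_class (- u)}"
    if u: "u \<in> val_units" for u
    unfolding roots_def using residue_class_square_eq_iff[OF _ u] u val_units_minus
    by (auto simp: image_iff)
  have "?S \<subseteq> ?Q"
    using val_units_power2 by blast
  then have "finite ?S"
    using finite_unit_classes by (rule finite_subset)
  moreover have "\<forall>s\<in>?S. finite (roots s)"
    using roots by auto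
  moreover have "roots s \<inter> roots s' = {}" if "s \<noteq> s'" for s s'
    using that residue_class_square_eq_iff unfolding roots_def by auto
  ultimately have "card (\<Union>(roots ` ?S)) = (\<Sum>s\<in>?S. card (roots s))"
    by (intro card_UN_disjoint) blast+
  also have "\<Union>(roots ` ?S) = ?Q"
    unfolding roots_def by blast
  also have "(\<Sum>s\<in>?S. card (roots s)) = (\<Sum>s\<in>?S. 2)"
    using roots residue_class_minus_neq by (intro sum.cong) auto
  finally show ?thesis by simp
qed

text \<open>Multiplication by a non-square maps the square classes injectively into the non-square
  classes; by the count above there are equally many of each, so every non-square class is hit.\<close>

lemma residue_square_mult_nonsquares:
  assumes a: "a \<in> val_units" and b: "b \<in> val_units"
    and "\<not> residue_square a" "\<not> residue_square b"
  shows "residue_square (a * b)"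
proof -
  let ?Q = "residue_class ` val_units" and ?S = "(\<lambda>t. residue_class (t ^ 2)) ` val_units"
  have "?S \<subseteq> ?Q" using val_units_power2 by blast
  have "residue_class_mult a ` ?S \<subseteq> ?Q - ?S"
  proof
    fix D assume "D \<in> residue_class_mult a ` ?S"
    then obtain t where t: "t \<in> val_units" "D = residue_class (a * t ^ 2)"
      using residue_class_mult a val_units_power2 by auto
    have "a * t ^ 2 \<in> val_units"
      using a t(1) by (simp add: val_units_mult val_units_power2)
    moreover have "\<not> residue_square (a * t ^ 2)"
      using residue_square_cancel_square[OF t(1)] assms(3) by blast
    ultimately show "D \<in> ?Q - ?S"
      using residue_square_iff t(2) by blast
  qed
  moreover have "inj_on (residue_class_mult a) ?S"
    using inj_on_residue_class_mult[OF a] \<open>?S \<subseteq> ?Q\<close> by (rule inj_on_subset)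
  moreover have "card (?Q - ?S) = card ?S"
    using card_Diff_subset[OF finite_subset[OF \<open>?S \<subseteq> ?Q\<close> finite_unit_classes] \<open>?S \<subseteq> ?Q\<close>]
      card_unit_classes by simp
  ultimately have "residue_class_mult a ` ?S = ?Q - ?S"
    using finite_unit_classes by (intro card_subset_eq) (auto simp: card_image)
  moreover have "residue_class b \<in> ?Q - ?S"
    using b assms(4) residue_square_iff by blast
  ultimately obtain t where "t \<in> val_units" "residue_class b = residue_class_mult a (residue_class (t ^ 2))"
    by (metis (no_types, lifting) image_iff)
  then have t: "t \<in> val_units" "residue_class b = residue_class (a * t ^ 2)"
    using residue_class_mult a val_units_power2 by auto
  then have "val_ge v 1 (a * (b - a * t ^ 2))"
    using residue_class_eq_iff b a val_units_mult val_units_power2 val_ge_mult_integral val_units_val_ge_0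
    by metis
  then have "val_ge v 1 (a * b - (a * t) ^ 2)"
    by (simp add: algebra_simps power2_eq_square)
  then show ?thesis
    unfolding residue_square_def using val_units_mult[OF a t(1)] by blast
qed

lemma square_if_residue_square:
  assumes "residue_square c"
  shows "\<exists>y. c = y ^ 2"
proof -
  obtain t where t: "t \<in> val_units" "val_ge v 1 (c - t ^ 2)"
    using assms by (auto simp: residue_square_def)
  have t0: "t \<noteq> 0" using t by (simp add: val_units_def)
  have "val_ge v 1 (inverse (t ^ 2) * (c - t ^ 2))"
    using val_ge_mult_integral[OF val_units_val_ge_0[OF val_units_inverse[OF val_units_power2[OF t(1)]]] t(2)] .
  moreover have "inverse (t ^ 2) * (c - t ^ 2) = c / t ^ 2 - 1" using t0 by (simp add: field_simps)
  ultimately obtain y where "y ^ 2 = c / t ^ 2" using exists_sqrt_principal_unit by auto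
  then have "c = (y * t) ^ 2" using t0 by (simp add: field_simps power_mult_distrib)
  then show ?thesis by blast
qed

lemma units_square_trichotomy:
  assumes "a \<in> val_units" "b \<in> val_units"
  shows "(\<exists>y. a = y ^ 2) \<or> (\<exists>y. b = y ^ 2) \<or> (\<exists>y. a * b = y ^ 2)"
  using residue_square_mult_nonsquares[OF assms] square_if_residue_square assms val_units_mult by blast

end

section \<open>Unramified quadratic extensions\<close>

locale field_involution =
  fixes \<sigma> :: "'e::field \<Rightarrow> 'e"
  assumes \<sigma>_add: "\<sigma> (x + y) = \<sigma> x + \<sigma> y" and \<sigma>_mult: "\<sigma> (x * y) = \<sigma> x * \<sigma> y"
    and \<sigma>_one [simp]: "\<sigma> 1 = 1" and \<sigma>_involutive [simp]: "\<sigma> (\<sigma> x) = x"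
    and \<sigma>_nontrivial: "\<exists>x. \<sigma> x \<noteq> x"
begin

lemma \<sigma>_zero [simp]: "\<sigma> 0 = 0"
  using \<sigma>_add[of 0 0] by (metis add_cancel_right_right add_0)

lemma \<sigma>_minus: "\<sigma> (- x) = - \<sigma> x"
  using \<sigma>_add[of x "- x"] by (simp add: eq_neg_iff_add_eq_0 add.commute)

lemma \<sigma>_diff: "\<sigma> (x - y) = \<sigma> x - \<sigma> y"
  using \<sigma>_add[of x "- y"] by (simp add: \<sigma>_minus)

lemma \<sigma>_eq_0_iff [simp]: "\<sigma> x = 0 \<longleftrightarrow> x = 0"
  by (metis \<sigma>_involutive \<sigma>_zero)

lemma \<sigma>_inverse: "\<sigma> (inverse x) = inverse (\<sigma> x)"
proof (cases "x = 0")
  case False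
  then have "\<sigma> x * \<sigma> (inverse x) = 1" by (simp flip: \<sigma>_mult)
  then show ?thesis by (metis inverse_unique)
qed simp

lemma \<sigma>_divide: "\<sigma> (x / y) = \<sigma> x / \<sigma> y"
  by (simp add: divide_inverse \<sigma>_mult \<sigma>_inverse)

lemma \<sigma>_power: "\<sigma> (x ^ n) = \<sigma> x ^ n"
  by (induction n) (simp_all add: \<sigma>_mult)

lemma exists_anti_invariant: "\<exists>b. b \<noteq> 0 \<and> \<sigma> b = - b"
proof -
  obtain x where "\<sigma> x \<noteq> x" using \<sigma>_nontrivial by blast
  then show ?thesis by (intro exI[of _ "x - \<sigma> x"]) (simp add: \<sigma>_diff)
qed

lemma norm_one_nonzero: "l * \<sigma> l = 1 \<Longrightarrow> l \<noteq> 0"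
  by auto

lemma norm_one_mult: "a * \<sigma> a = 1 \<Longrightarrow> b * \<sigma> b = 1 \<Longrightarrow> (a * b) * \<sigma> (a * b) = 1"
  by (simp add: \<sigma>_mult algebra_simps)

lemma norm_one_inverse: "a * \<sigma> a = 1 \<Longrightarrow> inverse a * \<sigma> (inverse a) = 1"
  by (simp add: \<sigma>_inverse flip: inverse_mult_distrib)

lemma norm_one_power: "a * \<sigma> a = 1 \<Longrightarrow> a ^ n * \<sigma> (a ^ n) = 1"
  by (simp add: \<sigma>_power flip: power_mult_distrib)

lemma norm_one_quotient: "a \<noteq> 0 \<Longrightarrow> (a / \<sigma> a) * \<sigma> (a / \<sigma> a) = 1"
  by (simp add: \<sigma>_divide)

lemma hilbert90:
  assumes u: "u * \<sigma> u = 1"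
  shows "\<exists>a. a \<noteq> 0 \<and> u = a / \<sigma> a"
proof (cases "u = - 1")
  case True
  then show ?thesis using exists_anti_invariant by fastforce
next
  case False
  have u0: "u \<noteq> 0" using u by auto
  have "1 + u \<noteq> 0" using False by (metis add.commute add_eq_0_iff)
  moreover have "\<sigma> (1 + u) = (1 + u) / u"
    using inverse_unique[OF u] u0 by (simp add: \<sigma>_add field_simps)
  ultimately show ?thesis
    using u0 by (intro exI[of _ "1 + u"]) simp
qed

definition norm_one_square :: "'e \<Rightarrow> bool" where
  "norm_one_square u \<longleftrightarrow> (\<exists>l. l * \<sigma> l = 1 \<and> u = l ^ 2)"

lemma norm_one_square_mult:
  "norm_one_square a \<Longrightarrow> b * \<sigma> b = 1 \<Longrightarrow> norm_one_square (a * b ^ 2)"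
  unfolding norm_one_square_def using norm_one_mult by (metis power_mult_distrib)

lemma norm_one_square_quotient: "y \<noteq> 0 \<Longrightarrow> norm_one_square (y ^ 2 / \<sigma> (y ^ 2))"
  unfolding norm_one_square_def using norm_one_quotient by (metis \<sigma>_power power_divide)

end

locale unramified_quadratic_extension = odd_local_field v p + field_involution \<sigma>
  for v :: "'e::field \<Rightarrow> int" and p and \<sigma> :: "'e \<Rightarrow> 'e" +
  assumes v_\<sigma>: "x \<noteq> 0 \<Longrightarrow> v (\<sigma> x) = v x"
    and invariant_uniformizer: "\<exists>\<pi>. \<pi> \<noteq> 0 \<and> \<sigma> \<pi> = \<pi> \<and> v \<pi> = 1"
begin

lemma v_norm_one:
  assumes "l * \<sigma> l = 1" shows "v l = 0"
proof -
  have "l \<noteq> 0" using assms by auto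
  then show ?thesis using v_mult[of l "\<sigma> l"] v_\<sigma>[of l] assms by simp
qed

lemma invariant_times_unit:
  assumes "a \<noteq> 0"
  shows "\<exists>f c. \<sigma> f = f \<and> f \<noteq> 0 \<and> c \<in> val_units \<and> a = f * c"
proof -
  obtain \<pi> where \<pi>: "\<pi> \<noteq> 0" "\<sigma> \<pi> = \<pi>" "v \<pi> = 1" using invariant_uniformizer by blast
  define f where "f = (if v a \<ge> 0 then \<pi> ^ nat (v a) else inverse (\<pi> ^ nat (- v a)))"
  have f: "\<sigma> f = f" "f \<noteq> 0" "v f = v a"
    using \<pi> by (auto simp: f_def \<sigma>_power \<sigma>_inverse v_power v_inverse)
  then have "a / f \<in> val_units" using assms by (simp add: val_units_def v_divide)
  with f show ?thesis by (intro exI[of _ f] exI[of _ "a / f"]) simp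
qed

lemma norm_one_unit_quotient:
  assumes "x * \<sigma> x = 1"
  shows "\<exists>c\<in>val_units. x = c / \<sigma> c"
proof -
  obtain a where "a \<noteq> 0" "x = a / \<sigma> a" using hilbert90[OF assms] by blast
  moreover obtain f c where "\<sigma> f = f" "f \<noteq> 0" "c \<in> val_units" "a = f * c"
    using invariant_times_unit[OF \<open>a \<noteq> 0\<close>] by blast
  ultimately have "x = c / \<sigma> c" by (simp add: \<sigma>_mult)
  with \<open>c \<in> val_units\<close> show ?thesis by blast
qed

lemma norm_one_square_trichotomy:
  assumes u: "u * \<sigma> u = 1" and w: "w * \<sigma> w = 1"
  shows "norm_one_square u \<or> norm_one_square w \<or> norm_one_square (u * w)"
proof -
  obtain c d where cd: "c \<in> val_units" "d \<in> val_units" "u = c / \<sigma> c" "w = d / \<sigma> d"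
    using norm_one_unit_quotient u w by blast
  then have c0: "c \<noteq> 0" "d \<noteq> 0" by (auto simp: val_units_def)
  have uw: "u * w = (c * d) / \<sigma> (c * d)" using cd by (simp add: \<sigma>_mult)
  have square_quotient: "norm_one_square (x / \<sigma> x)" if "x = y ^ 2" "x \<noteq> 0" for x y
    using norm_one_square_quotient[of y] that by simp
  from units_square_trichotomy[OF cd(1,2)] show ?thesis
  proof (elim disjE exE)
    fix y assume "c = y ^ 2" then show ?thesis using square_quotient c0 cd(3) by blast
  next
    fix y assume "d = y ^ 2" then show ?thesis using square_quotient c0 cd(4) by blast
  next
    fix y assume "c * d = y ^ 2"
    moreover have "c * d \<noteq> 0" using c0 by simp
    ultimately have "norm_one_square ((c * d) / \<sigma> (c * d))"
      by (rule square_quotient)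
    with uw show ?thesis by simp
  qed
qed

lemma norm_one_square_classes:
  "\<exists>d. d * \<sigma> d = 1 \<and> (\<forall>u. u * \<sigma> u = 1 \<longrightarrow> norm_one_square u \<or> norm_one_square (u * d))"
proof (cases "\<exists>d. d * \<sigma> d = 1 \<and> \<not> norm_one_square d")
  case True
  then show ?thesis using norm_one_square_trichotomy by blast
next
  case False
  then show ?thesis by (intro exI[of _ 1]) auto
qed

end

lemma unram_quad_setting_imp_unramified_quadratic_extension:
  assumes "prime p" "odd p" "unram_quad_setting p v \<sigma>"
  shows "unramified_quadratic_extension v p \<sigma>"
  using assms unfolding unram_quad_setting_def
  by unfold_locales (auto simp: discretely_valued_field_def)

section \<open>The unitary group \<open>U(1,1)\<close>\<close>

context field_involution
begin

lemma m2_star_mult: "m2_star \<sigma> (m2_mult A B) = m2_mult (m2_star \<sigma> B) (m2_star \<sigma> A)"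
  by (simp add: m2_star_def m2_mult_def \<sigma>_add \<sigma>_mult algebra_simps)

lemma m2_star_one: "m2_star \<sigma> m2_one = m2_one"
  by (simp add: m2_star_def m2_one_def)

lemma m2_det_star: "m2_det (m2_star \<sigma> A) = \<sigma> (m2_det A)"
  by (simp add: m2_star_def m2_det_def \<sigma>_diff \<sigma>_mult mult.commute)

lemma U11_iff: "g \<in> U11 \<sigma> \<longleftrightarrow> m2_det g \<noteq> 0 \<and> m2_mult (m2_star \<sigma> g) (m2_mult m2_s g) = m2_s"
  by (simp add: U11_def)

lemma mult_U11:
  assumes "g \<in> U11 \<sigma>" "h \<in> U11 \<sigma>"
  shows "m2_mult g h \<in> U11 \<sigma>"
proof -
  have "m2_mult (m2_star \<sigma> (m2_mult g h)) (m2_mult m2_s (m2_mult g h))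
      = m2_mult (m2_star \<sigma> h) (m2_mult (m2_mult (m2_star \<sigma> g) (m2_mult m2_s g)) h)"
    by (simp add: m2_star_mult m2_mult_assoc)
  also have "\<dots> = m2_s" using assms by (simp add: U11_iff)
  finally show ?thesis using assms by (simp add: U11_iff m2_det_mult)
qed

lemma inv_U11:
  assumes "g \<in> U11 \<sigma>"
  shows "m2_inv g \<in> U11 \<sigma>"
proof -
  let ?i = "m2_inv g"
  have d: "m2_det g \<noteq> 0" using assms by (simp add: U11_iff)
  have "m2_mult (m2_star \<sigma> ?i) (m2_mult m2_s ?i)
      = m2_mult (m2_star \<sigma> ?i) (m2_mult (m2_mult (m2_star \<sigma> g) (m2_mult m2_s g)) ?i)"
    using assms by (simp add: U11_iff)
  also have "\<dots> = m2_mult (m2_star \<sigma> (m2_mult g ?i)) (m2_mult m2_s (m2_mult g ?i))"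
    by (simp add: m2_star_mult m2_mult_assoc)
  also have "\<dots> = m2_s"
    using d by (simp add: m2_inv_right m2_star_one)
  finally show ?thesis using d by (simp add: U11_iff m2_det_inv)
qed

lemma det_U11_norm_one:
  assumes "g \<in> U11 \<sigma>"
  shows "m2_det g * \<sigma> (m2_det g) = 1"
proof -
  have "m2_det (m2_mult (m2_star \<sigma> g) (m2_mult m2_s g)) = m2_det m2_s"
    using assms by (simp add: U11_iff)
  moreover have "m2_det (m2_s :: 'e mat2) = - 1"
    by (simp add: m2_s_def m2_det_def)
  ultimately show ?thesis
    by (simp add: m2_det_mult m2_det_star mult.commute)
qed

lemma SU11_subset: "SU11 \<sigma> \<subseteq> U11 \<sigma>"
  by (auto simp: SU11_def)

lemma SU11_iff: "h \<in> SU11 \<sigma> \<longleftrightarrow> h \<in> U11 \<sigma> \<and> m2_det h = 1"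
  by (simp add: SU11_def)

lemma scalar_U11: "l * \<sigma> l = 1 \<Longrightarrow> m2_scalar l \<in> U11 \<sigma>"
  by (auto simp: U11_iff m2_scalar_def m2_star_def m2_mult_def m2_s_def m2_det_def mult.commute)

lemma scalar_center_U11: "l * \<sigma> l = 1 \<Longrightarrow> m2_scalar l \<in> group_center (U11 \<sigma>)"
  by (simp add: group_center_def scalar_U11 m2_scalar_commute)

text \<open>Commuting with \<open>s\<close> and with a unipotent element of \<open>U(1,1)\<close> forces a matrix to be scalar.\<close>

lemma center_U11_scalar:
  assumes z: "z \<in> group_center (U11 \<sigma>)"
  shows "\<exists>l. z = m2_scalar l \<and> l * \<sigma> l = 1"
proof -
  obtain b where b: "b \<noteq> 0" "\<sigma> b = - b" using exists_anti_invariant by blast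
  have "M2 1 b 0 1 \<in> U11 \<sigma>" "m2_s \<in> U11 \<sigma>"
    using b by (simp_all add: U11_iff m2_star_def m2_mult_def m2_s_def m2_det_def)
  then have "m2_mult z (M2 1 b 0 1) = m2_mult (M2 1 b 0 1) z" "m2_mult z m2_s = m2_mult m2_s z"
    using group_center_commute[OF z] by blast+
  then have e: "e21 z = 0" "e22 z = e11 z" "e12 z = 0"
    using b(1) by (auto simp: m2_mult_def m2_s_def m2_eq_iff)
  then have "z = m2_scalar (e11 z)" by (simp add: m2_scalar_def m2_eq_iff)
  moreover have "m2_mult (m2_star \<sigma> z) (m2_mult m2_s z) = m2_s"
    using group_center_subset[OF z] by (simp add: U11_iff)
  then have "e11 z * \<sigma> (e11 z) = 1"
    using e by (simp add: m2_star_def m2_mult_def m2_s_def m2_eq_iff mult.commute)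
  ultimately show ?thesis by blast
qed

lemma exists_U11_det:
  assumes "d * \<sigma> d = 1"
  shows "\<exists>t\<in>U11 \<sigma>. m2_det t = d"
proof -
  obtain a where a: "a \<noteq> 0" "d = a / \<sigma> a" using hilbert90[OF assms] by blast
  have "M2 a 0 0 (inverse (\<sigma> a)) \<in> U11 \<sigma>"
    using a by (simp add: U11_iff m2_det_def m2_star_def m2_mult_def m2_s_def \<sigma>_inverse)
  moreover have "m2_det (M2 a 0 0 (inverse (\<sigma> a))) = d"
    using a by (simp add: m2_det_def divide_inverse)
  ultimately show ?thesis by blast
qed

lemma conjugate_SU11:
  assumes "t \<in> U11 \<sigma>" "h \<in> SU11 \<sigma>"
  shows "m2_mult (m2_inv t) (m2_mult h t) \<in> SU11 \<sigma>"
proof -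
  have "m2_det t \<noteq> 0" using assms(1) by (simp add: U11_iff)
  then show ?thesis
    using assms by (simp add: SU11_iff mult_U11 inv_U11 m2_det_mult m2_det_inv)
qed

end

section \<open>Smooth irreducible representations of \<open>U(1,1)\<close>\<close>

locale smooth_irreducible_U11_rep = unramified_quadratic_extension v p \<sigma>
  for v :: "'e::field \<Rightarrow> int" and p and \<sigma> :: "'e \<Rightarrow> 'e" +
  fixes scale :: "'k::field \<Rightarrow> 'v::ab_group_add \<Rightarrow> 'v" and \<rho> :: "'e mat2 \<Rightarrow> 'v \<Rightarrow> 'v"
  assumes Fpbar: "is_Fpbar p TYPE('k)"
    and rep_U11: "is_rep scale (U11 \<sigma>) \<rho>"
    and smooth_U11: "is_smooth v (U11 \<sigma>) \<rho>"
    and irreducible_U11: "irred_subrep scale (U11 \<sigma>) \<rho> UNIV"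
begin

sublocale irreducible_mat2_group_rep scale "U11 \<sigma>" \<rho>
proof unfold_locales
  show "\<exists>g'\<in>U11 \<sigma>. m2_mult g' g = m2_one" if "g \<in> U11 \<sigma>" for g
  proof
    show "m2_inv g \<in> U11 \<sigma>" using inv_U11[OF that] .
    show "m2_mult (m2_inv g) g = m2_one" using that by (simp add: U11_iff m2_inv_left)
  qed
qed (use rep_U11 irreducible_U11 mult_U11 in auto)

text \<open>Of \<open>is_Fpbar\<close> only the algebraic closedness of the coefficient field is needed.\<close>

lemma alg_closed: "degree (q :: 'k poly) > 0 \<Longrightarrow> \<exists>r. poly q r = 0"
  using Fpbar by (simp add: is_Fpbar_def)

lemma rep_scalar_power:
  assumes "l * \<sigma> l = 1"
  shows "\<rho> (m2_scalar (l ^ k)) = \<rho> (m2_scalar l) ^^ k"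
proof (induction k)
  case 0 then show ?case by (simp add: m2_scalar_one)
next
  case (Suc k)
  have "\<rho> (m2_scalar (l ^ Suc k)) x = \<rho> (m2_scalar l) (\<rho> (m2_scalar (l ^ k)) x)" for x
    using rep_mult[OF scalar_U11[OF assms] scalar_U11[OF norm_one_power[OF assms]]]
    by (simp add: m2_scalar_mult)
  then show ?case using Suc by auto
qed

theorem U11_has_central_character: "has_central_character scale (U11 \<sigma>) \<rho>"
proof (rule has_central_character_if_periodic[OF alg_closed])
  fix z assume "z \<in> group_center (U11 \<sigma>)"
  then obtain l where z: "z = m2_scalar l" and l: "l * \<sigma> l = 1"
    using center_U11_scalar by blast
  obtain x :: 'v where "x \<noteq> 0" using exists_nonzero by blast
  obtain n where n: "\<And>g. g \<in> U11 \<sigma> \<inter> congr_sub v n \<Longrightarrow> \<rho> g x = x"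
    using smooth_U11 unfolding is_smooth_def by blast
  obtain N where "N > 0" and N: "val_ge v (int n) (l ^ N - 1)"
    using unit_power_congruent_one[of l n] norm_one_nonzero[OF l] v_norm_one[OF l] by blast
  have "m2_scalar (l ^ N) \<in> congr_sub v n"
    using N norm_one_nonzero[OF l] by (simp add: congr_sub_def m2_scalar_def m2_det_def)
  then have "\<rho> (m2_scalar (l ^ N)) x = x"
    using n scalar_U11[OF norm_one_power[OF l]] by blast
  then show "\<exists>N>0. \<exists>x. x \<noteq> 0 \<and> (\<rho> z ^^ N) x = x"
    using \<open>N > 0\<close> \<open>x \<noteq> 0\<close> rep_scalar_power[OF l] z by auto
qed

lemma U11_acts_through_SU11:
  assumes g: "g \<in> U11 \<sigma>" and "norm_one_square (m2_det g)"
  shows "\<exists>c h. h \<in> SU11 \<sigma> \<and> (\<forall>x. \<rho> g x = scale c (\<rho> h x))"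
proof -
  obtain l where l: "l * \<sigma> l = 1" "m2_det g = l ^ 2"
    using assms(2) unfolding norm_one_square_def by blast
  obtain \<chi> where \<chi>: "\<And>x. \<rho> (m2_scalar l) x = scale (\<chi> (m2_scalar l)) x"
    using U11_has_central_character scalar_center_U11[OF l(1)]
    unfolding has_central_character_def by blast
  define h where "h = m2_mult (m2_scalar (inverse l)) g"
  have hU: "h \<in> U11 \<sigma>"
    unfolding h_def using mult_U11[OF scalar_U11[OF norm_one_inverse[OF l(1)]] g] .
  have "m2_det h = 1"
    using l norm_one_nonzero[OF l(1)] by (simp add: h_def m2_det_mult m2_det_scalar power_inverse)
  then have "h \<in> SU11 \<sigma>" using hU by (simp add: SU11_iff)
  moreover have "g = m2_mult (m2_scalar l) h"
    using norm_one_nonzero[OF l(1)]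
    by (simp add: h_def m2_scalar_mult m2_scalar_one flip: m2_mult_assoc)
  then have "\<rho> g x = scale (\<chi> (m2_scalar l)) (\<rho> h x)" for x
    using rep_mult[OF scalar_U11[OF l(1)] hU] \<chi> by simp
  ultimately show ?thesis by blast
qed

lemma U11_acts_through_SU11_coset:
  assumes g: "g \<in> U11 \<sigma>" and t: "t \<in> U11 \<sigma>" and "norm_one_square (m2_det g * m2_det t)"
  shows "\<exists>c h. h \<in> SU11 \<sigma> \<and> (\<forall>x. \<rho> g x = scale c (\<rho> h (\<rho> t x)))"
proof -
  define g' where "g' = m2_mult g (m2_inv t)"
  have det_t: "m2_det t \<noteq> 0" "m2_det t * \<sigma> (m2_det t) = 1"
    using t det_U11_norm_one by (auto simp: U11_iff)
  have g'U: "g' \<in> U11 \<sigma>" using mult_U11[OF g inv_U11[OF t]] by (simp add: g'_def)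
  have "m2_det g' = (m2_det g * m2_det t) * (inverse (m2_det t)) ^ 2"
    using det_t by (simp add: g'_def m2_det_mult m2_det_inv power2_eq_square field_simps)
  then have "norm_one_square (m2_det g')"
    using norm_one_square_mult[OF assms(3) norm_one_inverse[OF det_t(2)]] by simp
  then obtain c h where "h \<in> SU11 \<sigma>" "\<And>x. \<rho> g' x = scale c (\<rho> h x)"
    using U11_acts_through_SU11[OF g'U] by blast
  moreover have "g = m2_mult g' t"
    by (simp add: g'_def m2_mult_assoc m2_inv_left[OF det_t(1)])
  then have "\<rho> g x = \<rho> g' (\<rho> t x)" for x
    using rep_mult[OF g'U t] by simp
  ultimately show ?thesis by auto
qed

theorem SU11_restriction_semisimple: "semisimple_length_le2 scale (SU11 \<sigma>) \<rho>"
proof -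
  obtain d where d: "d * \<sigma> d = 1"
    and classes: "\<And>u. u * \<sigma> u = 1 \<Longrightarrow> norm_one_square u \<or> norm_one_square (u * d)"
    using norm_one_square_classes by blast
  obtain t where t: "t \<in> U11 \<sigma>" "m2_det t = d"
    using exists_U11_det[OF d] by blast
  interpret index_two_restriction scale "U11 \<sigma>" \<rho> "SU11 \<sigma>" t
  proof unfold_locales
    show "SU11 \<sigma> \<subseteq> U11 \<sigma>" "t \<in> U11 \<sigma>"
      using SU11_subset t(1) by simp_all
  next
    fix h assume h: "h \<in> SU11 \<sigma>"
    let ?h' = "m2_mult (m2_inv t) (m2_mult h t)"
    have "m2_det t \<noteq> 0" using t(1) by (simp add: U11_iff)
    then have "m2_mult h t = m2_mult t ?h'"
      by (simp add: m2_inv_right flip: m2_mult_assoc)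
    moreover have "?h' \<in> SU11 \<sigma>" by (rule conjugate_SU11[OF t(1) h])
    ultimately show "\<exists>h'\<in>SU11 \<sigma>. \<forall>x. \<rho> h (\<rho> t x) = \<rho> t (\<rho> h' x)"
      using h t(1) SU11_subset by (metis rep_mult subsetD)
  next
    have "norm_one_square (m2_det (m2_mult t t))"
      using d t(2) by (auto simp: m2_det_mult norm_one_square_def power2_eq_square)
    then obtain c h where "h \<in> SU11 \<sigma>" "\<And>x. \<rho> (m2_mult t t) x = scale c (\<rho> h x)"
      using U11_acts_through_SU11 mult_U11[OF t(1) t(1)] by blast
    then show "\<exists>c h. h \<in> SU11 \<sigma> \<and> (\<forall>x. \<rho> t (\<rho> t x) = scale c (\<rho> h x))"
      using rep_mult[OF t(1) t(1)] by auto
  next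
    fix g assume g: "g \<in> U11 \<sigma>"
    then show "\<exists>c h. h \<in> SU11 \<sigma> \<and>
            ((\<forall>x. \<rho> g x = scale c (\<rho> h x)) \<or> (\<forall>x. \<rho> g x = scale c (\<rho> h (\<rho> t x))))"
      using classes[OF det_U11_norm_one[OF g]] U11_acts_through_SU11 U11_acts_through_SU11_coset[OF g t(1)] t(2)
      by blast
  qed
  show ?thesis by (rule restriction_semisimple_length_le2)
qed

end

theorem proposition4p6:
  fixes p :: nat and v :: "'e::field \<Rightarrow> int" and \<sigma> :: "'e \<Rightarrow> 'e"
    and scale :: "'k::field \<Rightarrow> 'v::ab_group_add \<Rightarrow> 'v" and \<rho> :: "'e mat2 \<Rightarrow> 'v \<Rightarrow> 'v"
  assumes "prime p" and "odd p"
    and "unram_quad_setting p v \<sigma>"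
    and "is_Fpbar p TYPE('k)"
    and "is_rep scale (U11 \<sigma>) \<rho>"
    and "is_smooth v (U11 \<sigma>) \<rho>"
    and "irred_subrep scale (U11 \<sigma>) \<rho> UNIV"
  shows "has_central_character scale (U11 \<sigma>) \<rho> \<and> semisimple_length_le2 scale (SU11 \<sigma>) \<rho>"
proof -
  interpret unramified_quadratic_extension v p \<sigma>
    using unram_quad_setting_imp_unramified_quadratic_extension assms(1-3) .
  interpret smooth_irreducible_U11_rep v p \<sigma> scale \<rho>
    by unfold_locales (use assms(4-7) in auto)
  show ?thesis
    using U11_has_central_character SU11_restriction_semisimple by blast
qed

end
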